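(* Let $\mathcal{H}\subseteq\mathbb{R}^d$ be convex, let $\|\cdot\|$ be a norm on $\mathbb{R}^d$, let $(\mathcal{F}_t)_{t\ge0}$ be a filtration, and let $f_1,f_2,\dots$ be (not necessarily convex) differentiable random loss functions and $u,w_1,w_2,\dots$ random points of $\mathcal{H}$ such that: (1) $w_t$ is $\mathcal{F}_{t-1}$-measurable and $u$ is $\mathcal{F}_0$-measurable; (2) $f_t$ is $\mathcal{F}_t$-measurable and $\mathbb{E}[f_t\mid\mathcal{F}_{t-1}]$ is $\alpha$-strongly convex with respect to $\|\cdot\|$; (3) $f_t$ is almost surely $L$-Lipschitz with respect to $\|\cdot\|$ on $\mathcal{H}$. Then for any $\delta\in(0,1)$, with probability at least $1-\delta$, simultaneously for all $T\ge0$, $$\sum_{t=1}^T\big(f_t(w_t)-f_t(u)\big)\le\sum_{t=1}^T\Big((w_t-u)^\top\nabla f_t(w_t)-\frac{\alpha}{4}\|w_t-u\|^2\Big)+\frac{8L^2\log(1/\delta)}{\alpha}.$$ *)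

theory Defs
  imports "HOL-Probability.Probability"
begin

definition is_norm :: "('v::real_vector \<Rightarrow> real) \<Rightarrow> bool" where
  "is_norm N \<longleftrightarrow> (\<forall>x. N x = 0 \<longleftrightarrow> x = 0) \<and> (\<forall>c x. N (c *\<^sub>R x) = \<bar>c\<bar> * N x)
     \<and> (\<forall>x y. N (x + y) \<le> N x + N y)"

definition strongly_convex_wrt ::
    "'v::real_vector set \<Rightarrow> real \<Rightarrow> ('v \<Rightarrow> real) \<Rightarrow> ('v \<Rightarrow> real) \<Rightarrow> bool" where
  "strongly_convex_wrt H \<alpha> N \<phi> \<longleftrightarrow>
     (\<forall>x\<in>H. \<forall>y\<in>H. \<forall>\<theta>\<in>{0..1}.
        \<phi> (\<theta> *\<^sub>R x + (1 - \<theta>) *\<^sub>R y)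
          \<le> \<theta> * \<phi> x + (1 - \<theta>) * \<phi> y - \<alpha> / 2 * \<theta> * (1 - \<theta>) * (N (x - y))\<^sup>2)"

definition is_filtration :: "'a measure \<Rightarrow> (nat \<Rightarrow> 'a measure) \<Rightarrow> bool" where
  "is_filtration M F \<longleftrightarrow> (\<forall>t. subalgebra M (F t)) \<and> (\<forall>s t. s \<le> t \<longrightarrow> sets (F s) \<subseteq> sets (F t))"

end

theory Submission
  imports Defs
begin

text \<open>Let \<open>X\<^sub>t = f\<^sub>t(w\<^sub>t) - f\<^sub>t(u) - (w\<^sub>t - u) \<bullet> \<nabla>f\<^sub>t(w\<^sub>t)\<close> and \<open>d\<^sub>t = N(w\<^sub>t - u)\<close>; the claim is
  that \<open>\<Sum>t\<le>T. X\<^sub>t + \<alpha>/4 d\<^sub>t\<^sup>2\<close> stays below \<open>8 L\<^sup>2 ln(1/\<delta>) / \<alpha>\<close> for all \<open>T\<close> with probability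
  \<open>1 - \<delta>\<close>. Strong convexity of \<open>E[f\<^sub>t | F\<^sub>t\<^sub>-\<^sub>1]\<close> along the segment from \<open>w\<^sub>t\<close> to \<open>u\<close>, divided
  by the step length and passed to the limit, gives \<open>E[X\<^sub>t | F\<^sub>t\<^sub>-\<^sub>1] \<le> -\<alpha>/2 d\<^sub>t\<^sup>2\<close>. Lipschitz
  continuity gives \<open>|X\<^sub>t| \<le> 2 L d\<^sub>t\<close> and, together with strong convexity, bounds the diameter of
  \<open>H\<close> by \<open>4 L / \<alpha>\<close>, so that \<open>\<alpha>/2 d\<^sub>t\<^sup>2 \<le> 2 L d\<^sub>t\<close>. Hoeffding's lemma, applied conditionally
  with \<open>\<lambda> = \<alpha> / (8 L\<^sup>2)\<close>, then makes \<open>exp (\<lambda> \<Sum>t\<le>T. X\<^sub>t + \<alpha>/4 d\<^sub>t\<^sup>2)\<close> a nonnegative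
  supermartingale started at 1, and Ville's maximal inequality bounds the probability that it
  ever exceeds \<open>1/\<delta>\<close> by \<open>\<delta>\<close>.

  Conditional expectations are handled through bounded \<open>F\<^sub>t\<^sub>-\<^sub>1\<close>-measurable test weights.
  Since the strong convexity hypothesis only concerns \<open>E[f\<^sub>t(x) | F\<^sub>t\<^sub>-\<^sub>1]\<close> at fixed points \<open>x\<close>,
  it is transferred to random points by approximating them with finitely-valued ones drawn
  from a countable dense subset of \<open>H\<close>.\<close>

section \<open>Norms given as functions\<close>

lemma is_norm_eq_zero_iff: "is_norm N \<Longrightarrow> N x = 0 \<longleftrightarrow> x = 0"
  and is_norm_scaleR: "is_norm N \<Longrightarrow> N (c *\<^sub>R x) = \<bar>c\<bar> * N x"
  and is_norm_triangle: "is_norm N \<Longrightarrow> N (x + y) \<le> N x + N y"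
  unfolding is_norm_def by auto

lemma is_norm_zero: "is_norm N \<Longrightarrow> N 0 = 0"
  by (simp add: is_norm_eq_zero_iff)

lemma is_norm_minus_commute: "is_norm N \<Longrightarrow> N (x - y) = N (y - x)"
  using is_norm_scaleR[of N "-1" "x - y"] by simp

lemma is_norm_nonneg: "is_norm N \<Longrightarrow> 0 \<le> N x"
  using is_norm_triangle[of N x "-x"] is_norm_minus_commute[of N x 0] by (simp add: is_norm_zero)

lemma is_norm_sum_le: "is_norm N \<Longrightarrow> N (sum g S) \<le> (\<Sum>i\<in>S. N (g i))"
  by (induction S rule: infinite_finite_induct)
     (auto simp: is_norm_zero intro: order_trans[OF is_norm_triangle])

lemma is_norm_lipschitz:
  fixes N :: "'v::euclidean_space \<Rightarrow> real"
  assumes N: "is_norm N"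
  shows "(\<Sum>b\<in>Basis. N b)-lipschitz_on UNIV N"
proof (rule lipschitz_onI)
  have le_norm: "N x \<le> (\<Sum>b\<in>Basis. N b) * norm x" for x
  proof -
    have "N x = N (\<Sum>b\<in>Basis. (x \<bullet> b) *\<^sub>R b)" by (simp add: euclidean_representation)
    also have "\<dots> \<le> (\<Sum>b\<in>Basis. \<bar>x \<bullet> b\<bar> * N b)"
      using is_norm_sum_le[OF N, of "\<lambda>b. (x \<bullet> b) *\<^sub>R b" Basis] by (simp add: is_norm_scaleR[OF N])
    also have "\<dots> \<le> (\<Sum>b\<in>Basis. norm x * N b)"
      by (intro sum_mono mult_right_mono Basis_le_norm is_norm_nonneg[OF N]) auto
    finally show ?thesis by (simp add: sum_distrib_left mult.commute)
  qed
  show "dist (N x) (N y) \<le> (\<Sum>b\<in>Basis. N b) * dist x y" for x y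
    using is_norm_triangle[OF N, of "x - y" y] is_norm_triangle[OF N, of "y - x" x]
      is_norm_minus_commute[OF N, of x y] le_norm[of "x - y"]
    by (simp add: dist_real_def dist_norm abs_le_iff)
  show "0 \<le> (\<Sum>b\<in>Basis. N b)" by (intro sum_nonneg is_norm_nonneg[OF N])
qed

lemma borel_measurable_is_norm:
  fixes N :: "'v::euclidean_space \<Rightarrow> real"
  shows "is_norm N \<Longrightarrow> N \<in> borel_measurable borel"
  by (intro borel_measurable_continuous_onI lipschitz_on_continuous_on[OF is_norm_lipschitz])

section \<open>Measurable approximation from a dense sequence\<close>

text \<open>Unlike a nearest point of a dense set, this index depends measurably on \<open>y\<close>.\<close>
primrec nearest_index :: "(nat \<Rightarrow> 'v::metric_space) \<Rightarrow> 'v \<Rightarrow> nat \<Rightarrow> nat" where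
  "nearest_index q y 0 = 0"
| "nearest_index q y (Suc n) =
     (if dist (q (Suc n)) y < dist (q (nearest_index q y n)) y then Suc n else nearest_index q y n)"

lemma nearest_index_le: "nearest_index q y n \<le> n"
  by (induction n) auto

lemma dist_nearest_index_le: "k \<le> n \<Longrightarrow> dist (q (nearest_index q y n)) y \<le> dist (q k) y"
  by (induction n) (auto simp: le_Suc_eq)

lemma tendsto_nearest_index:
  assumes "\<And>e. e > 0 \<Longrightarrow> \<exists>k. dist (q k) y < e"
  shows "(\<lambda>n. q (nearest_index q y n)) \<longlonglongrightarrow> y"
proof (rule tendstoI)
  fix e :: real assume "e > 0"
  then obtain k where k: "dist (q k) y < e" using assms by blast
  show "\<forall>\<^sub>F n in sequentially. dist (q (nearest_index q y n)) y < e"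
    using eventually_ge_at_top[of k]
    by eventually_elim (use dist_nearest_index_le[of k _ q y] k in force)
qed

lemma measurable_nearest_index:
  fixes x :: "'a \<Rightarrow> 'v::{metric_space, second_countable_topology}"
  assumes x: "x \<in> borel_measurable G"
  shows "(\<lambda>\<omega>. nearest_index q (x \<omega>) n) \<in> measurable G (count_space UNIV)"
proof (induction n)
  case (Suc n)
  have d: "(\<lambda>\<omega>. dist (q i) (x \<omega>)) \<in> borel_measurable G" for i
    using x by measurable
  have "(\<lambda>\<omega>. dist (q (nearest_index q (x \<omega>) n)) (x \<omega>)) \<in> borel_measurable G"
    by (rule measurable_compose_countable[OF d Suc])
  then have "{\<omega> \<in> space G. dist (q (Suc n)) (x \<omega>) < dist (q (nearest_index q (x \<omega>) n)) (x \<omega>)} \<in> sets G"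
    by (intro borel_measurable_less d)
  then show ?case using Suc by (simp add: measurable_If)
qed simp

lemma integral_split_finite_index:
  fixes V :: "'a \<Rightarrow> real" and \<kappa> :: "'a \<Rightarrow> 'i" and h :: "'i \<Rightarrow> 'a \<Rightarrow> real"
  assumes I: "finite I" and \<kappa>: "\<And>\<omega>. \<omega> \<in> space M \<Longrightarrow> \<kappa> \<omega> \<in> I"
    and h: "\<And>p. p \<in> I \<Longrightarrow> integrable M (\<lambda>\<omega>. (if \<kappa> \<omega> = p then V \<omega> else 0) * h p \<omega>)"
  shows "(\<integral>\<omega>. V \<omega> * h (\<kappa> \<omega>) \<omega> \<partial>M) = (\<Sum>p\<in>I. \<integral>\<omega>. (if \<kappa> \<omega> = p then V \<omega> else 0) * h p \<omega> \<partial>M)"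
proof -
  have "(\<Sum>p\<in>I. \<integral>\<omega>. (if \<kappa> \<omega> = p then V \<omega> else 0) * h p \<omega> \<partial>M)
      = (\<integral>\<omega>. (\<Sum>p\<in>I. (if \<kappa> \<omega> = p then V \<omega> else 0) * h p \<omega>) \<partial>M)"
    using h by (intro Bochner_Integration.integral_sum[symmetric]) auto
  also have "\<dots> = (\<integral>\<omega>. V \<omega> * h (\<kappa> \<omega>) \<omega> \<partial>M)"
  proof (rule Bochner_Integration.integral_cong[OF refl])
    fix \<omega> assume "\<omega> \<in> space M"
    have "(\<Sum>p\<in>I. (if \<kappa> \<omega> = p then V \<omega> else 0) * h p \<omega>)
        = (\<Sum>p\<in>I. if \<kappa> \<omega> = p then V \<omega> * h p \<omega> else 0)"
      by (intro sum.cong) auto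
    also have "\<dots> = V \<omega> * h (\<kappa> \<omega>) \<omega>"
      using I \<kappa>[OF \<open>\<omega> \<in> space M\<close>] by simp
    finally show "(\<Sum>p\<in>I. (if \<kappa> \<omega> = p then V \<omega> else 0) * h p \<omega>) = V \<omega> * h (\<kappa> \<omega>) \<omega>" .
  qed
  finally show ?thesis by simp
qed

section \<open>Difference quotients\<close>

lemma tendsto_difference_quotient:
  fixes g :: "'v::real_inner \<Rightarrow> real" and s :: "nat \<Rightarrow> real"
  assumes g: "(g has_derivative (\<lambda>h. D \<bullet> h)) (at x)" and s: "s \<longlonglongrightarrow> 0" "\<And>n. s n \<noteq> 0"
  shows "(\<lambda>n. (g (s n *\<^sub>R y + (1 - s n) *\<^sub>R x) - g x) / s n) \<longlonglongrightarrow> D \<bullet> (y - x)"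
proof -
  define v where "v = y - x"
  have "((\<lambda>h. x + h *\<^sub>R v) has_derivative (\<lambda>h. h *\<^sub>R v)) (at 0)"
    by (auto intro!: derivative_eq_intros)
  moreover have "(g has_derivative (\<lambda>h. D \<bullet> h)) (at (x + 0 *\<^sub>R v))" using g by simp
  ultimately have "((\<lambda>h. g (x + h *\<^sub>R v)) has_derivative (\<lambda>h. D \<bullet> (h *\<^sub>R v))) (at 0)"
    by (rule has_derivative_compose)
  then have "((\<lambda>h. g (x + h *\<^sub>R v)) has_field_derivative (D \<bullet> v)) (at 0)"
    unfolding has_field_derivative_def by (simp add: mult.commute[of _ "D \<bullet> v"])
  then have "((\<lambda>h. (g (x + h *\<^sub>R v) - g x) / h) \<longlongrightarrow> D \<bullet> v) (at 0)"
    unfolding DERIV_def by simp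
  moreover have "filterlim s (at 0) sequentially"
    unfolding filterlim_at using s by (auto intro!: always_eventually)
  ultimately have "(\<lambda>n. (g (x + s n *\<^sub>R v) - g x) / s n) \<longlonglongrightarrow> D \<bullet> v"
    by (rule filterlim_compose)
  moreover have "x + s n *\<^sub>R v = s n *\<^sub>R y + (1 - s n) *\<^sub>R x" for n
    unfolding v_def by (simp add: algebra_simps)
  ultimately show ?thesis unfolding v_def by simp
qed

definition shrink :: "nat \<Rightarrow> real" where "shrink n = 1 / (real n + 2)"

lemma shrink_pos: "0 < shrink n" and shrink_le_1: "shrink n \<le> 1"
  unfolding shrink_def by (auto simp: field_simps)

lemma shrink_tendsto_0: "shrink \<longlonglongrightarrow> 0"
proof -
  have "(\<lambda>n. inverse (real (Suc (Suc n)))) \<longlonglongrightarrow> 0"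
    by (rule LIMSEQ_Suc[OF LIMSEQ_inverse_real_of_nat])
  moreover have "(\<lambda>n. inverse (real (Suc (Suc n)))) = shrink"
    by (auto simp: shrink_def fun_eq_iff field_simps)
  ultimately show ?thesis by simp
qed

section \<open>Hoeffding's lemma with test weights\<close>

lemma exp_le_chord:
  fixes a b x l :: real
  assumes ab: "a < b" and x: "a \<le> x" "x \<le> b" and l: "l \<ge> 0"
  shows "exp (l * x) \<le> ((b - x) * exp (l * a) + (x - a) * exp (l * b)) / (b - a)"
proof -
  define y where "y = (b - x) / (b - a)"
  have y: "y \<in> {0..1}" using x ab by (auto simp: y_def)
  have "exp (l * ((1 - y) *\<^sub>R b + y *\<^sub>R a)) \<le> (1 - y) * exp (l * b) + y * exp (l * a)"
    using y l by (intro convex_onD[OF convex_on_exp]) auto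
  also have "(1 - y) *\<^sub>R b + y *\<^sub>R a = x"
    using ab by (simp add: y_def divide_simps) (simp add: algebra_simps)
  also have "(1 - y) * exp (l * b) + y * exp (l * a)
      = ((b - x) * exp (l * a) + (x - a) * exp (l * b)) / (b - a)"
  proof -
    have "1 - y = (x - a) / (b - a)" using ab by (simp add: y_def field_simps)
    then show ?thesis by (simp add: y_def add_divide_distrib ac_simps)
  qed
  finally show ?thesis .
qed

lemma exp_chord_le_Hoeffding:
  fixes a b m l :: real
  assumes ab: "a < b" and am: "a \<le> m" and mb: "m \<le> b" and l: "l \<ge> 0"
  shows "((b - m) * exp (l * a) + (m - a) * exp (l * b)) / (b - a)
           \<le> exp (l * m + l\<^sup>2 * (b - a)\<^sup>2 / 8)"
proof -
  define p where "p = (m - a) / (b - a)"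
  define z where "z = l * (b - a)"
  have p0: "p \<ge> 0" and z0: "z \<ge> 0" using am ab l by (auto simp: p_def z_def)
  have pos: "1 + p * (exp z - 1) > 0"
    using p0 z0 by (smt (verit) mult_nonneg_nonneg one_le_exp_iff)
  have ea: "exp (l * a) = exp (l * m) * exp (- z * p)"
    using ab by (simp add: p_def z_def exp_add[symmetric] field_simps)
  have eb: "exp (l * b) = exp (l * m) * exp (- z * p) * exp z"
    using ab by (simp add: p_def z_def exp_add[symmetric] field_simps)
  have "((b - m) * exp (l * a) + (m - a) * exp (l * b)) / (b - a)
      = exp (l * m) * (exp (- z * p) * (1 + p * (exp z - 1)))"
    unfolding ea eb using ab by (simp add: p_def field_simps)
  also have "\<dots> = exp (l * m + (- z * p + ln (1 + p * (exp z - 1))))"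
    using pos by (simp add: exp_add exp_diff exp_minus field_simps)
  also have "\<dots> \<le> exp (l * m + z\<^sup>2 / 8)"
    using Hoeffdings_lemma_aux[OF z0 p0] by simp
  finally show ?thesis by (simp add: z_def power_mult_distrib)
qed

text \<open>The chord of \<open>x \<mapsto> exp (l * x)\<close> over \<open>[-b, b]\<close> is \<open>cosh (l * b) + x * (sinh (l * b) / b)\<close>;
  for \<open>b = 0\<close> the division by zero makes this the constant \<open>1\<close>.\<close>
lemma exp_le_cosh_sinh_chord:
  fixes b x l :: real
  assumes "\<bar>x\<bar> \<le> b" "0 \<le> l"
  shows "exp (l * x) \<le> cosh (l * b) + x * (sinh (l * b) / b)"
proof (cases "b = 0")
  case False
  then have b: "- b < b" using assms by simp
  have "((b - x) * exp (l * - b) + (x - - b) * exp (l * b)) / (b - - b)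
      = cosh (l * b) + x * (sinh (l * b) / b)"
    using b by (simp add: cosh_field_def sinh_field_def field_simps)
  with exp_le_chord[OF b _ _ assms(2), of x] assms(1) show ?thesis
    by (simp add: abs_le_iff)
qed (use assms in simp)

lemma cosh_sinh_chord_le_exp:
  fixes b m l :: real
  assumes "\<bar>m\<bar> \<le> b" "0 \<le> l"
  shows "cosh (l * b) + m * (sinh (l * b) / b) \<le> exp (l * m + (l * b)\<^sup>2 / 2)"
proof (cases "b = 0")
  case False
  then have b: "- b < b" using assms by simp
  have "((b - m) * exp (l * - b) + (m - - b) * exp (l * b)) / (b - - b)
      = cosh (l * b) + m * (sinh (l * b) / b)"
    using b by (simp add: cosh_field_def sinh_field_def field_simps)
  moreover have "l\<^sup>2 * (b - - b)\<^sup>2 / 8 = (l * b)\<^sup>2 / 2"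
    by (simp add: power2_eq_square)
  ultimately show ?thesis
    using exp_chord_le_Hoeffding[OF b _ _ assms(2), of m] assms(1) by (simp add: abs_le_iff)
qed (use assms in simp)

lemma sinh_le_mult_exp:
  fixes y :: real
  assumes "0 \<le> y"
  shows "sinh y \<le> y * exp y"
proof -
  have "exp (- y) = exp y * exp (- 2 * y)" by (simp add: exp_add[symmetric])
  also have "\<dots> \<ge> exp y * (1 - 2 * y)"
    using exp_ge_add_one_self[of "- 2 * y"] by (intro mult_left_mono) auto
  finally show ?thesis by (simp add: sinh_field_def algebra_simps)
qed

definition bounded_weight :: "'a measure \<Rightarrow> ('a \<Rightarrow> real) \<Rightarrow> bool" where
  "bounded_weight G V \<longleftrightarrow> V \<in> borel_measurable G \<and> (\<exists>B. \<forall>\<omega>\<in>space G. 0 \<le> V \<omega> \<and> V \<omega> \<le> B)"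

lemma bounded_weightI:
  "V \<in> borel_measurable G \<Longrightarrow> (\<And>\<omega>. \<omega> \<in> space G \<Longrightarrow> 0 \<le> V \<omega> \<and> V \<omega> \<le> B) \<Longrightarrow> bounded_weight G V"
  unfolding bounded_weight_def by blast

lemma bounded_weightE:
  assumes "bounded_weight G V"
  obtains B where "V \<in> borel_measurable G" "\<And>\<omega>. \<omega> \<in> space G \<Longrightarrow> 0 \<le> V \<omega> \<and> V \<omega> \<le> B"
  using assms unfolding bounded_weight_def by blast

lemma bounded_weight_mult:
  assumes "bounded_weight G V" "bounded_weight G W"
  shows "bounded_weight G (\<lambda>\<omega>. V \<omega> * W \<omega>)"
proof -
  obtain B C where "V \<in> borel_measurable G" "W \<in> borel_measurable G"
    and "\<And>\<omega>. \<omega> \<in> space G \<Longrightarrow> 0 \<le> V \<omega> \<and> V \<omega> \<le> B"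
    and "\<And>\<omega>. \<omega> \<in> space G \<Longrightarrow> 0 \<le> W \<omega> \<and> W \<omega> \<le> C"
    using assms by (metis bounded_weightE)
  then show ?thesis
    by (intro bounded_weightI[where B="B * C"]) (auto intro: mult_mono order_trans)
qed

lemma bounded_weight_restrict:
  assumes V: "bounded_weight G V" and P: "{\<omega> \<in> space G. P \<omega>} \<in> sets G"
  shows "bounded_weight G (\<lambda>\<omega>. if P \<omega> then V \<omega> else 0)"
proof -
  obtain B where "V \<in> borel_measurable G" "\<And>\<omega>. \<omega> \<in> space G \<Longrightarrow> 0 \<le> V \<omega> \<and> V \<omega> \<le> B"
    using V unfolding bounded_weight_def by blast
  with P show ?thesis by (intro bounded_weightI[where B=B] measurable_If) (auto intro: order_trans)
qed

lemma bounded_weight_indicator: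
  "A \<in> sets G \<Longrightarrow> bounded_weight G (indicator A)"
  by (intro bounded_weightI[where B=1]) (auto split: split_indicator)

lemma bounded_weight_chord_coefficients:
  fixes b :: "'a \<Rightarrow> real"
  assumes b: "b \<in> borel_measurable G" "\<And>\<omega>. \<omega> \<in> space G \<Longrightarrow> 0 \<le> b \<omega> \<and> b \<omega> \<le> B" and l: "0 \<le> l"
  shows "bounded_weight G (\<lambda>\<omega>. cosh (l * b \<omega>))" "bounded_weight G (\<lambda>\<omega>. sinh (l * b \<omega>) / b \<omega>)"
proof -
  have [measurable]: "(cosh :: real \<Rightarrow> real) \<in> borel_measurable borel"
      "(sinh :: real \<Rightarrow> real) \<in> borel_measurable borel"
    by (intro borel_measurable_continuous_onI continuous_on_cosh continuous_on_sinh continuous_on_id)+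
  show "bounded_weight G (\<lambda>\<omega>. cosh (l * b \<omega>))"
  proof (rule bounded_weightI[where B="cosh (l * B)"])
    show "(\<lambda>\<omega>. cosh (l * b \<omega>)) \<in> borel_measurable G" using b(1) by measurable
    show "0 \<le> cosh (l * b \<omega>) \<and> cosh (l * b \<omega>) \<le> cosh (l * B)" if "\<omega> \<in> space G" for \<omega>
    proof -
      have "0 \<le> l * b \<omega>" "l * b \<omega> \<le> l * B" using b(2)[OF that] l by (auto intro: mult_left_mono)
      then show ?thesis by (simp add: cosh_real_nonneg_le_iff)
    qed
  qed
  show "bounded_weight G (\<lambda>\<omega>. sinh (l * b \<omega>) / b \<omega>)"
  proof (rule bounded_weightI[where B="l * exp (l * B)"])
    show "(\<lambda>\<omega>. sinh (l * b \<omega>) / b \<omega>) \<in> borel_measurable G" using b(1) by measurable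
    show "0 \<le> sinh (l * b \<omega>) / b \<omega> \<and> sinh (l * b \<omega>) / b \<omega> \<le> l * exp (l * B)"
      if "\<omega> \<in> space G" for \<omega>
    proof (cases "b \<omega> = 0")
      case False
      then have pos: "b \<omega> > 0" using b(2)[OF that] by simp
      have "sinh (l * b \<omega>) \<le> l * b \<omega> * exp (l * B)"
        using sinh_le_mult_exp[of "l * b \<omega>"] b(2)[OF that] l pos
        by (smt (verit) exp_le_cancel_iff mult_left_mono mult_nonneg_nonneg)
      with pos l show ?thesis by (simp add: divide_le_eq ac_simps)
    qed (use l in simp)
  qed
qed

context finite_measure
begin

lemma integrable_bounded_weight:
  assumes G: "subalgebra M G" and V: "bounded_weight G V"
  shows "integrable M V"
proof -
  obtain B where "V \<in> borel_measurable G" "\<And>\<omega>. \<omega> \<in> space G \<Longrightarrow> 0 \<le> V \<omega> \<and> V \<omega> \<le> B"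
    using V unfolding bounded_weight_def by blast
  with G show ?thesis
    by (intro integrable_const_bound[where B=B]) (auto simp: subalgebra_def intro: measurable_from_subalg)
qed

lemma integrable_bounded_weight_mult:
  fixes h :: "'a \<Rightarrow> real"
  assumes G: "subalgebra M G" and V: "bounded_weight G V" and h: "integrable M h"
  shows "integrable M (\<lambda>\<omega>. V \<omega> * h \<omega>)"
proof -
  obtain B where Vm: "V \<in> borel_measurable M" and Vb: "\<And>\<omega>. \<omega> \<in> space M \<Longrightarrow> 0 \<le> V \<omega> \<and> V \<omega> \<le> B"
    using V G unfolding bounded_weight_def subalgebra_def by (blast intro: measurable_from_subalg[OF G])
  show ?thesis
  proof (rule Bochner_Integration.integrable_bound[where f="\<lambda>\<omega>. B * h \<omega>"])
    show "(\<lambda>\<omega>. V \<omega> * h \<omega>) \<in> borel_measurable M" using Vm h by measurable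
    show "AE \<omega> in M. norm (V \<omega> * h \<omega>) \<le> norm (B * h \<omega>)"
      using Vb by (intro AE_I2) (force simp: abs_mult intro: mult_right_mono)
  qed (use h in simp)
qed

text \<open>Hoeffding's lemma conditionally on \<open>G\<close>, with conditional expectations expressed through
  \<open>G\<close>-measurable test weights: if \<open>|X| \<le> b\<close> and \<open>E[X | G] \<le> m\<close>, then
  \<open>E[exp (l X) | G] \<le> exp (l m + (l b)\<^sup>2 / 2)\<close>.\<close>
lemma weighted_Hoeffding:
  fixes X b m W :: "'a \<Rightarrow> real" and l B :: real
  assumes G: "subalgebra M G"
    and X: "X \<in> borel_measurable M" "AE \<omega> in M. \<bar>X \<omega>\<bar> \<le> b \<omega>"
    and b: "b \<in> borel_measurable G" "\<And>\<omega>. \<omega> \<in> space M \<Longrightarrow> b \<omega> \<le> B"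
    and m: "m \<in> borel_measurable G" "\<And>\<omega>. \<omega> \<in> space M \<Longrightarrow> \<bar>m \<omega>\<bar> \<le> b \<omega>"
    and drift: "\<And>V. bounded_weight G V \<Longrightarrow> (\<integral>\<omega>. V \<omega> * X \<omega> \<partial>M) \<le> (\<integral>\<omega>. V \<omega> * m \<omega> \<partial>M)"
    and W: "bounded_weight G W" and l: "0 \<le> l"
  shows "(\<integral>\<omega>. W \<omega> * exp (l * X \<omega>) \<partial>M) \<le> (\<integral>\<omega>. W \<omega> * exp (l * m \<omega> + (l * b \<omega>)\<^sup>2 / 2) \<partial>M)"
proof -
  have space_G: "space G = space M" using G by (simp add: subalgebra_def)
  have b0: "0 \<le> b \<omega>" if "\<omega> \<in> space M" for \<omega> using m(2)[OF that] by linarith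
  define c0 where "c0 \<omega> = cosh (l * b \<omega>)" for \<omega>
  define c1 where "c1 \<omega> = sinh (l * b \<omega>) / b \<omega>" for \<omega>
  have b_bounds: "\<And>\<omega>. \<omega> \<in> space G \<Longrightarrow> 0 \<le> b \<omega> \<and> b \<omega> \<le> B" using b0 b(2) space_G by auto
  have c0: "bounded_weight G c0" and c1: "bounded_weight G c1"
    unfolding c0_def c1_def using bounded_weight_chord_coefficients[OF b(1) b_bounds l] by auto
  have bounded: "integrable M h" if "h \<in> borel_measurable G" "\<And>\<omega>. \<omega> \<in> space M \<Longrightarrow> \<bar>h \<omega>\<bar> \<le> K"
    for h :: "'a \<Rightarrow> real" and K
    using that measurable_from_subalg[OF G that(1)] by (intro integrable_const_bound[where B=K]) auto
  have XB: "AE \<omega> in M. \<bar>X \<omega>\<bar> \<le> B"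
    using AE_space X(2) by eventually_elim (use b(2) in force)
  have iX: "integrable M X"
    using XB X(1) by (intro integrable_const_bound[where B=B]) auto
  have i_exp: "integrable M (\<lambda>\<omega>. exp (l * X \<omega>))"
  proof (rule integrable_const_bound[where B="exp (l * B)"])
    show "AE \<omega> in M. norm (exp (l * X \<omega>)) \<le> exp (l * B)"
      using XB by eventually_elim (use l in \<open>auto simp: abs_le_iff intro: mult_left_mono\<close>)
  qed (use X(1) in measurable)
  have i_rhs: "integrable M (\<lambda>\<omega>. exp (l * m \<omega> + (l * b \<omega>)\<^sup>2 / 2))"
  proof (rule bounded[where K="exp (l * B + (l * B)\<^sup>2 / 2)"])
    show "(\<lambda>\<omega>. exp (l * m \<omega> + (l * b \<omega>)\<^sup>2 / 2)) \<in> borel_measurable G"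
      using b(1) m(1) by measurable
    show "\<bar>exp (l * m \<omega> + (l * b \<omega>)\<^sup>2 / 2)\<bar> \<le> exp (l * B + (l * B)\<^sup>2 / 2)" if "\<omega> \<in> space M" for \<omega>
      using m(2)[OF that] b(2)[OF that] b0[OF that] l
      by (auto intro!: add_mono divide_right_mono power_mono mult_left_mono)
  qed
  have im: "integrable M m"
    using m b(2) by (intro bounded[where K=B]) (auto intro: order_trans)
  have Wc1: "bounded_weight G (\<lambda>\<omega>. W \<omega> * c1 \<omega>)" by (rule bounded_weight_mult[OF W c1])
  have "(\<integral>\<omega>. W \<omega> * exp (l * X \<omega>) \<partial>M) \<le> (\<integral>\<omega>. W \<omega> * c0 \<omega> + (W \<omega> * c1 \<omega>) * X \<omega> \<partial>M)"
  proof (rule integral_mono_AE)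
    show "AE \<omega> in M. W \<omega> * exp (l * X \<omega>) \<le> W \<omega> * c0 \<omega> + W \<omega> * c1 \<omega> * X \<omega>"
      using AE_space X(2)
    proof eventually_elim
      case (elim \<omega>)
      then have "W \<omega> * exp (l * X \<omega>) \<le> W \<omega> * (c0 \<omega> + X \<omega> * c1 \<omega>)"
        using exp_le_cosh_sinh_chord[of "X \<omega>" "b \<omega>" l] l W space_G
        unfolding c0_def c1_def by (intro mult_left_mono) (auto elim: bounded_weightE)
      then show ?case by (simp add: algebra_simps)
    qed
  qed (use integrable_bounded_weight_mult[OF G W i_exp] integrable_bounded_weight_mult[OF G Wc1 iX]
      integrable_bounded_weight[OF G bounded_weight_mult[OF W c0]] in simp_all)
  also have "\<dots> \<le> (\<integral>\<omega>. W \<omega> * c0 \<omega> + (W \<omega> * c1 \<omega>) * m \<omega> \<partial>M)"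
    using drift[OF Wc1] integrable_bounded_weight_mult[OF G Wc1 iX] integrable_bounded_weight_mult[OF G Wc1 im]
      integrable_bounded_weight[OF G bounded_weight_mult[OF W c0]]
    by simp
  also have "\<dots> \<le> (\<integral>\<omega>. W \<omega> * exp (l * m \<omega> + (l * b \<omega>)\<^sup>2 / 2) \<partial>M)"
  proof (rule integral_mono)
    show "W \<omega> * c0 \<omega> + W \<omega> * c1 \<omega> * m \<omega> \<le> W \<omega> * exp (l * m \<omega> + (l * b \<omega>)\<^sup>2 / 2)"
      if "\<omega> \<in> space M" for \<omega>
    proof -
      have "W \<omega> * (c0 \<omega> + m \<omega> * c1 \<omega>) \<le> W \<omega> * exp (l * m \<omega> + (l * b \<omega>)\<^sup>2 / 2)"
        using cosh_sinh_chord_le_exp[OF m(2)[OF that] l] W that space_G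
        unfolding c0_def c1_def by (intro mult_left_mono) (auto elim: bounded_weightE)
      then show ?thesis by (simp add: algebra_simps)
    qed
  qed (use integrable_bounded_weight_mult[OF G W i_rhs] integrable_bounded_weight_mult[OF G Wc1 im]
      integrable_bounded_weight[OF G bounded_weight_mult[OF W c0]] in simp_all)
  finally show ?thesis .
qed

end

section \<open>A maximal inequality for nonnegative supermartingales\<close>

lemma (in finite_measure) AE_restrict_event:
  assumes P: "AE \<omega> in M. P \<omega>" and B: "B \<in> sets M"
  obtains A where "A \<in> sets M" "A \<subseteq> B" "measure M A = measure M B" "\<And>\<omega>. \<omega> \<in> A \<Longrightarrow> P \<omega>"
proof -
  obtain N0 where N0: "{\<omega> \<in> space M. \<not> P \<omega>} \<subseteq> N0" "emeasure M N0 = 0" "N0 \<in> sets M"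
    using P by (rule AE_E)
  have "measure M (B - N0) = measure M B"
    using N0(2,3) B by (intro measure_Diff_null_set) (auto simp: emeasure_eq_measure)
  then show ?thesis
    using that[of "B - N0"] N0(1,3) B sets.sets_into_space[OF B] by blast
qed

lemma exceedance_window_Suc_subset:
  fixes Z :: "nat \<Rightarrow> 'a \<Rightarrow> real"
  shows "{\<omega> \<in> A. \<exists>j\<in>{k..k + Suc n}. c \<le> Z j \<omega>}
    \<subseteq> {\<omega> \<in> A. c \<le> Z k \<omega>} \<union> {\<omega> \<in> {\<omega> \<in> A. Z k \<omega> < c}. \<exists>j\<in>{Suc k..Suc k + n}. c \<le> Z j \<omega>}"
proof
  fix \<omega> assume "\<omega> \<in> {\<omega> \<in> A. \<exists>j\<in>{k..k + Suc n}. c \<le> Z j \<omega>}"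
  then obtain j where j: "\<omega> \<in> A" "k \<le> j" "j \<le> k + Suc n" "c \<le> Z j \<omega>" by auto
  show "\<omega> \<in> {\<omega> \<in> A. c \<le> Z k \<omega>} \<union> {\<omega> \<in> {\<omega> \<in> A. Z k \<omega> < c}. \<exists>j\<in>{Suc k..Suc k + n}. c \<le> Z j \<omega>}"
  proof (cases "c \<le> Z k \<omega>")
    case False
    then have "j \<noteq> k" using j by auto
    then have "j \<in> {Suc k..Suc k + n}" using j by simp
    then show ?thesis using j False by (auto simp: not_le)
  qed (use j in simp)
qed

locale nonneg_supermartingale = prob_space +
  fixes F :: "nat \<Rightarrow> 'a measure" and Z :: "nat \<Rightarrow> 'a \<Rightarrow> real"
  assumes filtration: "is_filtration M F"
    and adapted: "\<And>n. Z n \<in> borel_measurable (F n)"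
    and nonneg: "\<And>n \<omega>. \<omega> \<in> space M \<Longrightarrow> 0 \<le> Z n \<omega>"
    and integrable_Z: "\<And>n. integrable M (Z n)"
    and supermartingale: "\<And>n A. A \<in> sets (F n) \<Longrightarrow>
          (\<integral>\<omega>. indicator A \<omega> * Z (Suc n) \<omega> \<partial>M) \<le> (\<integral>\<omega>. indicator A \<omega> * Z n \<omega> \<partial>M)"
begin

lemma sets_F_subset: "sets (F n) \<subseteq> sets M"
  using filtration by (auto simp: is_filtration_def subalgebra_def)

lemma sets_F_mono: "s \<le> t \<Longrightarrow> sets (F s) \<subseteq> sets (F t)"
  using filtration unfolding is_filtration_def by blast

lemma space_F: "space (F n) = space M"
  using filtration by (auto simp: is_filtration_def subalgebra_def)

lemma measurable_Z [measurable]: "Z n \<in> borel_measurable M"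
  using filtration adapted by (auto simp: is_filtration_def intro: measurable_from_subalg)

lemma integrable_indicator_Z: "A \<in> sets M \<Longrightarrow> integrable M (\<lambda>\<omega>. indicator A \<omega> * Z n \<omega>)"
  using integrable_real_mult_indicator[OF _ integrable_Z] by (simp add: mult.commute)

lemma exceedance_set_in_sets: "A \<in> sets M \<Longrightarrow> {\<omega> \<in> A. \<exists>j\<in>J. c \<le> Z j \<omega>} \<in> sets M"
proof -
  assume A: "A \<in> sets M"
  have "{\<omega> \<in> A. \<exists>j\<in>J. c \<le> Z j \<omega>} = A \<inter> {\<omega> \<in> space M. \<exists>j\<in>J. c \<le> Z j \<omega>}"
    using sets.sets_into_space[OF A] by auto
  also have "\<dots> \<in> sets M" using A by measurable
  finally show ?thesis .
qed

lemma integral_indicator_split: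
  assumes A: "A \<in> sets M"
  shows "(\<integral>\<omega>. indicator {\<omega> \<in> A. c \<le> Z k \<omega>} \<omega> * Z k \<omega> \<partial>M)
           + (\<integral>\<omega>. indicator {\<omega> \<in> A. Z k \<omega> < c} \<omega> * Z k \<omega> \<partial>M)
         = (\<integral>\<omega>. indicator A \<omega> * Z k \<omega> \<partial>M)"
proof -
  have S: "{\<omega> \<in> A. c \<le> Z k \<omega>} \<in> sets M" "{\<omega> \<in> A. Z k \<omega> < c} \<in> sets M"
    using A by (auto simp: not_le[symmetric] intro: exceedance_set_in_sets[of _ "{k}", simplified]
        sets.Diff[OF A, of "{\<omega> \<in> A. c \<le> Z k \<omega>}", simplified set_diff_eq])
  moreover have "(\<lambda>\<omega>. indicator {\<omega> \<in> A. c \<le> Z k \<omega>} \<omega> * Z k \<omega> + indicator {\<omega> \<in> A. Z k \<omega> < c} \<omega> * Z k \<omega>)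
      = (\<lambda>\<omega>. indicator A \<omega> * Z k \<omega>)"
    by (auto simp: indicator_def)
  ultimately show ?thesis
    using Bochner_Integration.integral_add[OF integrable_indicator_Z[OF S(1)] integrable_indicator_Z[OF S(2)], of k k]
    by simp
qed

lemma Markov_indicator:
  assumes A: "A \<in> sets M" and c: "0 < c"
  shows "c * measure M {\<omega> \<in> A. c \<le> Z k \<omega>}
           \<le> (\<integral>\<omega>. indicator {\<omega> \<in> A. c \<le> Z k \<omega>} \<omega> * Z k \<omega> \<partial>M)"
proof -
  define S where "S = {\<omega> \<in> A. c \<le> Z k \<omega>}"
  have S: "S \<in> sets M" unfolding S_def using exceedance_set_in_sets[OF A, of "{k}"] by simp
  have "{\<omega> \<in> space M. c \<le> indicator S \<omega> * Z k \<omega>} = S"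
    using c sets.sets_into_space[OF S] by (auto simp: S_def split: split_indicator)
  then have "measure M S \<le> (\<integral>\<omega>. indicator S \<omega> * Z k \<omega> \<partial>M) / c"
    using integral_Markov_inequality_measure[OF integrable_indicator_Z[OF S] sets.top _ c, of k]
      nonneg by (auto split: split_indicator)
  then show ?thesis using c unfolding S_def by (simp add: field_simps)
qed

text \<open>The induction step splits \<open>A\<close> according to whether \<open>Z k\<close> already exceeds \<open>c\<close>:
  the first part is handled by Markov's inequality, the second lies in \<open>F k\<close> and is passed on
  to time \<open>k + 1\<close> via the supermartingale property.\<close>
lemma maximal_inequality_window:
  assumes c: "0 < c"
  shows "A \<in> sets (F k) \<Longrightarrow>
    c * measure M {\<omega> \<in> A. \<exists>j\<in>{k..k+n}. c \<le> Z j \<omega>} \<le> (\<integral>\<omega>. indicator A \<omega> * Z k \<omega> \<partial>M)"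
proof (induction n arbitrary: k A)
  case 0
  have A: "A \<in> sets M" using 0 sets_F_subset by blast
  have S: "{\<omega> \<in> A. c \<le> Z k \<omega>} \<in> sets M" using exceedance_set_in_sets[OF A, of "{k}"] by simp
  have "c * measure M {\<omega> \<in> A. \<exists>j\<in>{k..k+0}. c \<le> Z j \<omega>}
      \<le> (\<integral>\<omega>. indicator {\<omega> \<in> A. c \<le> Z k \<omega>} \<omega> * Z k \<omega> \<partial>M)"
    using Markov_indicator[OF A c] by simp
  also have "\<dots> \<le> (\<integral>\<omega>. indicator A \<omega> * Z k \<omega> \<partial>M)"
    by (rule integral_mono[OF integrable_indicator_Z[OF S] integrable_indicator_Z[OF A]])
       (auto simp: indicator_def nonneg)
  finally show ?case .
next
  case (Suc n)
  have A: "A \<in> sets M" using Suc.prems sets_F_subset by blast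
  define S0 where "S0 = {\<omega> \<in> A. c \<le> Z k \<omega>}"
  define A' where "A' = {\<omega> \<in> A. Z k \<omega> < c}"
  have A'F: "A' \<in> sets (F k)"
  proof -
    have "A' = A \<inter> {\<omega> \<in> space (F k). Z k \<omega> < c}"
      unfolding A'_def using sets.sets_into_space[OF Suc.prems] by auto
    also have "\<dots> \<in> sets (F k)" using Suc.prems adapted[of k] by measurable
    finally show ?thesis .
  qed
  have A'F': "A' \<in> sets (F (Suc k))"
    using sets_F_mono[of k "Suc k"] A'F by (rule subsetD) simp
  have A'M: "A' \<in> sets M" using A'F sets_F_subset by blast
  have S0M: "S0 \<in> sets M" unfolding S0_def using exceedance_set_in_sets[OF A, of "{k}"] by simp
  define S1 where "S1 = {\<omega> \<in> A'. \<exists>j\<in>{Suc k..Suc k + n}. c \<le> Z j \<omega>}"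
  have S1M: "S1 \<in> sets M" unfolding S1_def by (rule exceedance_set_in_sets[OF A'M])
  have "{\<omega> \<in> A. \<exists>j\<in>{k..k + Suc n}. c \<le> Z j \<omega>} \<subseteq> S0 \<union> S1"
    unfolding S0_def S1_def A'_def by (rule exceedance_window_Suc_subset)
  then have "c * measure M {\<omega> \<in> A. \<exists>j\<in>{k..k + Suc n}. c \<le> Z j \<omega>} \<le> c * measure M (S0 \<union> S1)"
    using c S0M S1M by (intro mult_left_mono finite_measure_mono) auto
  also have "\<dots> \<le> c * measure M S0 + c * measure M S1"
    using measure_Un_le[OF S0M S1M] c by (simp add: distrib_left[symmetric])
  also have "c * measure M S0 \<le> (\<integral>\<omega>. indicator S0 \<omega> * Z k \<omega> \<partial>M)"
    unfolding S0_def by (rule Markov_indicator[OF A c])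
  also have "c * measure M S1 \<le> (\<integral>\<omega>. indicator A' \<omega> * Z (Suc k) \<omega> \<partial>M)"
    unfolding S1_def using Suc.IH[OF A'F'] by simp
  also have "\<dots> \<le> (\<integral>\<omega>. indicator A' \<omega> * Z k \<omega> \<partial>M)"
    by (rule supermartingale[OF A'F])
  also have "(\<integral>\<omega>. indicator S0 \<omega> * Z k \<omega> \<partial>M) + (\<integral>\<omega>. indicator A' \<omega> * Z k \<omega> \<partial>M)
      = (\<integral>\<omega>. indicator A \<omega> * Z k \<omega> \<partial>M)"
    unfolding S0_def A'_def by (rule integral_indicator_split[OF A])
  finally show ?case by simp
qed

theorem maximal_inequality:
  assumes c: "0 < c"
  shows "measure M {\<omega> \<in> space M. \<exists>n. c \<le> Z n \<omega>} \<le> (\<integral>\<omega>. Z 0 \<omega> \<partial>M) / c"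
proof -
  define B where "B n = {\<omega> \<in> space M. \<exists>j\<in>{0..0 + n}. c \<le> Z j \<omega>}" for n
  have B: "range B \<subseteq> sets M" unfolding B_def using exceedance_set_in_sets[OF sets.top] by auto
  have "incseq B" unfolding B_def incseq_def by fastforce
  then have "(\<lambda>n. measure M (B n)) \<longlonglongrightarrow> measure M (\<Union>n. B n)"
    using B by (intro finite_Lim_measure_incseq)
  moreover have "measure M (B n) \<le> (\<integral>\<omega>. Z 0 \<omega> \<partial>M) / c" for n
  proof -
    have "(\<integral>\<omega>. indicator (space M) \<omega> * Z 0 \<omega> \<partial>M) = (\<integral>\<omega>. Z 0 \<omega> \<partial>M)"
      by (intro Bochner_Integration.integral_cong) auto
    with maximal_inequality_window[OF c sets.top[of "F 0"], of n]
    have "c * measure M (B n) \<le> (\<integral>\<omega>. Z 0 \<omega> \<partial>M)"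
      by (simp add: B_def space_F)
    with c show ?thesis by (simp add: pos_le_divide_eq mult.commute)
  qed
  ultimately have "measure M (\<Union>n. B n) \<le> (\<integral>\<omega>. Z 0 \<omega> \<partial>M) / c"
    by (intro LIMSEQ_le_const2) auto
  moreover have "(\<Union>n. B n) = {\<omega> \<in> space M. \<exists>n. c \<le> Z n \<omega>}"
    unfolding B_def by fastforce
  ultimately show ?thesis by simp
qed

end

section \<open>Losses with strongly convex conditional expectations\<close>

locale cond_strongly_convex_losses = prob_space M for M :: "'a measure" +
  fixes F :: "nat \<Rightarrow> 'a measure"
    and H :: "(real ^ 'd) set"
    and N :: "real ^ 'd \<Rightarrow> real"
    and f :: "nat \<Rightarrow> 'a \<Rightarrow> real ^ 'd \<Rightarrow> real"
    and grad :: "nat \<Rightarrow> 'a \<Rightarrow> real ^ 'd \<Rightarrow> real ^ 'd"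
    and u :: "'a \<Rightarrow> real ^ 'd"
    and w :: "nat \<Rightarrow> 'a \<Rightarrow> real ^ 'd"
    and \<alpha> L :: real
  assumes filtration: "is_filtration M F"
    and convex_H: "convex H"
    and norm_N: "is_norm N"
    and alpha_pos: "\<alpha> > 0"
    and has_derivative_f: "\<And>t \<omega> x. t \<ge> 1 \<Longrightarrow> \<omega> \<in> space M \<Longrightarrow>
           (f t \<omega> has_derivative (\<lambda>h. grad t \<omega> x \<bullet> h)) (at x)"
    and u_measurable: "u \<in> borel_measurable (F 0)"
    and u_in_H: "\<And>\<omega>. \<omega> \<in> space M \<Longrightarrow> u \<omega> \<in> H"
    and w_measurable: "\<And>t. t \<ge> 1 \<Longrightarrow> w t \<in> borel_measurable (F (t - 1))"
    and w_in_H: "\<And>t \<omega>. t \<ge> 1 \<Longrightarrow> \<omega> \<in> space M \<Longrightarrow> w t \<omega> \<in> H"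
    and f_measurable: "\<And>t x. t \<ge> 1 \<Longrightarrow> (\<lambda>\<omega>. f t \<omega> x) \<in> borel_measurable (F t)"
    and f_integrable: "\<And>t x. t \<ge> 1 \<Longrightarrow> x \<in> H \<Longrightarrow> integrable M (\<lambda>\<omega>. f t \<omega> x)"
    and cond_exp_strongly_convex: "\<And>t. t \<ge> 1 \<Longrightarrow> \<exists>g :: 'a \<Rightarrow> real ^ 'd \<Rightarrow> real.
           (\<forall>x\<in>H. (\<lambda>\<omega>. g \<omega> x) \<in> borel_measurable (F (t - 1))
                 \<and> (AE \<omega> in M. g \<omega> x = real_cond_exp M (F (t - 1)) (\<lambda>\<omega>'. f t \<omega>' x) \<omega>))
           \<and> (AE \<omega> in M. strongly_convex_wrt H \<alpha> N (g \<omega>))"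
    and f_Lipschitz: "\<And>t. t \<ge> 1 \<Longrightarrow> AE \<omega> in M. \<forall>x\<in>H. \<forall>y\<in>H. \<bar>f t \<omega> x - f t \<omega> y\<bar> \<le> L * N (x - y)"
begin

lemmas N_nonneg = is_norm_nonneg[OF norm_N]
  and N_scaleR = is_norm_scaleR[OF norm_N]
  and N_minus_commute = is_norm_minus_commute[OF norm_N]
  and N_eq_zero_iff = is_norm_eq_zero_iff[OF norm_N]
  and borel_measurable_N = borel_measurable_is_norm[OF norm_N]

lemma subalgebra_F: "subalgebra M (F t)"
  using filtration unfolding is_filtration_def by auto

lemma space_F: "space (F t) = space M"
  using subalgebra_F unfolding subalgebra_def by auto

lemma measurable_from_F: "g \<in> borel_measurable (F t) \<Longrightarrow> g \<in> borel_measurable M"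
  using measurable_from_subalg[OF subalgebra_F] .

lemma measurable_F_mono: "s \<le> t \<Longrightarrow> g \<in> borel_measurable (F s) \<Longrightarrow> g \<in> borel_measurable (F t)"
  using filtration unfolding is_filtration_def
  by (intro measurable_from_subalg[of "F t" "F s"]) (auto simp: subalgebra_def)

lemma u_measurable_F: "u \<in> borel_measurable (F s)"
  using measurable_F_mono[OF _ u_measurable] by simp

lemma strongly_convex_version:
  assumes t: "t \<ge> 1"
  obtains g :: "'a \<Rightarrow> real ^ 'd \<Rightarrow> real"
  where "\<And>V x. bounded_weight (F (t - 1)) V \<Longrightarrow> x \<in> H \<Longrightarrow>
           integrable M (\<lambda>\<omega>. V \<omega> * g \<omega> x) \<and> (\<integral>\<omega>. V \<omega> * f t \<omega> x \<partial>M) = (\<integral>\<omega>. V \<omega> * g \<omega> x \<partial>M)"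
    and "AE \<omega> in M. strongly_convex_wrt H \<alpha> N (g \<omega>)"
proof -
  obtain g :: "'a \<Rightarrow> real ^ 'd \<Rightarrow> real" where
    g_measurable: "\<And>x. x \<in> H \<Longrightarrow> (\<lambda>\<omega>. g \<omega> x) \<in> borel_measurable (F (t - 1))"
    and g_cond_exp: "\<And>x. x \<in> H \<Longrightarrow> AE \<omega> in M. g \<omega> x = real_cond_exp M (F (t - 1)) (\<lambda>\<omega>'. f t \<omega>' x) \<omega>"
    and g_convex: "AE \<omega> in M. strongly_convex_wrt H \<alpha> N (g \<omega>)"
    using cond_exp_strongly_convex[OF t] by blast
  interpret S: finite_measure_subalgebra M "F (t - 1)"
    by unfold_locales (rule subalgebra_F)
  have version: "integrable M (\<lambda>\<omega>. V \<omega> * g \<omega> x) \<and> (\<integral>\<omega>. V \<omega> * f t \<omega> x \<partial>M) = (\<integral>\<omega>. V \<omega> * g \<omega> x \<partial>M)"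
    if V: "bounded_weight (F (t - 1)) V" and x: "x \<in> H" for V x
  proof -
    have VF: "V \<in> borel_measurable (F (t - 1))" using V by (rule bounded_weightE)
    have fx: "integrable M (\<lambda>\<omega>. f t \<omega> x)" using f_integrable[OF t x] .
    have "integrable M (\<lambda>\<omega>. V \<omega> * f t \<omega> x)"
      by (rule integrable_bounded_weight_mult[OF subalgebra_F V fx])
    from S.real_cond_exp_intg[OF this VF borel_measurable_integrable[OF fx]]
    have c1: "integrable M (\<lambda>\<omega>. V \<omega> * real_cond_exp M (F (t - 1)) (\<lambda>\<omega>'. f t \<omega>' x) \<omega>)"
      and c2: "(\<integral>\<omega>. V \<omega> * real_cond_exp M (F (t - 1)) (\<lambda>\<omega>'. f t \<omega>' x) \<omega> \<partial>M) = (\<integral>\<omega>. V \<omega> * f t \<omega> x \<partial>M)"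
      by auto
    have ae: "AE \<omega> in M. V \<omega> * real_cond_exp M (F (t - 1)) (\<lambda>\<omega>'. f t \<omega>' x) \<omega> = V \<omega> * g \<omega> x"
      using g_cond_exp[OF x] by eventually_elim simp
    have gM: "(\<lambda>\<omega>. V \<omega> * g \<omega> x) \<in> borel_measurable M"
      using measurable_from_F[OF VF] measurable_from_F[OF g_measurable[OF x]] by simp
    show ?thesis
      using integrable_cong_AE_imp[OF c1 gM ae] c2 integral_cong_AE[OF _ gM ae]
        measurable_from_F[OF VF] borel_measurable_cond_exp2 by simp
  qed
  show ?thesis by (rule that[OF version g_convex])
qed

lemma weighted_strong_convexity:
  assumes t: "t \<ge> 1" and a: "a \<in> H" and b: "b \<in> H" and \<theta>: "0 \<le> \<theta>" "\<theta> \<le> 1"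
    and V: "bounded_weight (F (t - 1)) V"
  shows "(\<integral>\<omega>. V \<omega> * f t \<omega> (\<theta> *\<^sub>R a + (1 - \<theta>) *\<^sub>R b) \<partial>M)
     \<le> \<theta> * (\<integral>\<omega>. V \<omega> * f t \<omega> a \<partial>M) + (1 - \<theta>) * (\<integral>\<omega>. V \<omega> * f t \<omega> b \<partial>M)
        - \<alpha> / 2 * \<theta> * (1 - \<theta>) * (\<integral>\<omega>. V \<omega> * (N (a - b))\<^sup>2 \<partial>M)"
proof -
  obtain g where g_version: "\<And>V x. bounded_weight (F (t - 1)) V \<Longrightarrow> x \<in> H \<Longrightarrow>
      integrable M (\<lambda>\<omega>. V \<omega> * g \<omega> x) \<and> (\<integral>\<omega>. V \<omega> * f t \<omega> x \<partial>M) = (\<integral>\<omega>. V \<omega> * g \<omega> x \<partial>M)"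
    and g_convex: "AE \<omega> in M. strongly_convex_wrt H \<alpha> N (g \<omega>)"
    using strongly_convex_version[OF t] by blast
  note g = g_version[OF V]
  define c where "c = \<theta> *\<^sub>R a + (1 - \<theta>) *\<^sub>R b"
  have cH: "c \<in> H" unfolding c_def using convex_H a b \<theta> by (intro convexD) auto
  have iV: "integrable M V" by (rule integrable_bounded_weight[OF subalgebra_F V])
  have "(\<integral>\<omega>. V \<omega> * f t \<omega> c \<partial>M) = (\<integral>\<omega>. V \<omega> * g \<omega> c \<partial>M)" using g[OF cH] by simp
  also have "\<dots> \<le> (\<integral>\<omega>. \<theta> * (V \<omega> * g \<omega> a) + (1 - \<theta>) * (V \<omega> * g \<omega> b)
                        - \<alpha> / 2 * \<theta> * (1 - \<theta>) * (V \<omega> * (N (a - b))\<^sup>2) \<partial>M)"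
  proof (rule integral_mono_AE)
    show "AE \<omega> in M. V \<omega> * g \<omega> c \<le> \<theta> * (V \<omega> * g \<omega> a) + (1 - \<theta>) * (V \<omega> * g \<omega> b)
                        - \<alpha> / 2 * \<theta> * (1 - \<theta>) * (V \<omega> * (N (a - b))\<^sup>2)"
      using AE_space g_convex
    proof eventually_elim
      case (elim \<omega>)
      then have "g \<omega> c \<le> \<theta> * g \<omega> a + (1 - \<theta>) * g \<omega> b - \<alpha> / 2 * \<theta> * (1 - \<theta>) * (N (a - b))\<^sup>2"
        using a b \<theta> unfolding strongly_convex_wrt_def c_def by auto
      moreover have "0 \<le> V \<omega>" using V elim(1) space_F by (auto elim: bounded_weightE)
      ultimately have "V \<omega> * g \<omega> c
          \<le> V \<omega> * (\<theta> * g \<omega> a + (1 - \<theta>) * g \<omega> b - \<alpha> / 2 * \<theta> * (1 - \<theta>) * (N (a - b))\<^sup>2)"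
        by (rule mult_left_mono)
      then show ?case by (simp add: algebra_simps)
    qed
  qed (use g[OF cH] g[OF a] g[OF b] iV in auto)
  also have "\<dots> = \<theta> * (\<integral>\<omega>. V \<omega> * f t \<omega> a \<partial>M) + (1 - \<theta>) * (\<integral>\<omega>. V \<omega> * f t \<omega> b \<partial>M)
                   - \<alpha> / 2 * \<theta> * (1 - \<theta>) * (\<integral>\<omega>. V \<omega> * (N (a - b))\<^sup>2 \<partial>M)"
    using g[OF a] g[OF b] iV by simp
  finally show ?thesis unfolding c_def .
qed

text \<open>Comparing strong convexity at the midpoint of \<open>a\<close> and \<open>b\<close> with the Lipschitz bound
  (for \<open>t = 1\<close>, with unit weight) shows that \<open>H\<close> has diameter at most \<open>4 L / \<alpha>\<close>.\<close>
lemma strong_convexity_le_Lipschitz: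
  assumes a: "a \<in> H" and b: "b \<in> H"
  shows "\<alpha> / 8 * (N (a - b))\<^sup>2 \<le> L / 2 * N (a - b)"
proof -
  define m where "m = (1 / 2 :: real) *\<^sub>R a + (1 - 1 / 2) *\<^sub>R b"
  have mH: "m \<in> H" unfolding m_def using convex_H a b by (intro convexD) auto
  have one: "bounded_weight (F (1 - 1)) (\<lambda>_. 1)"
    by (intro bounded_weightI[where B=1]) auto
  have sc: "(\<integral>\<omega>. 1 * f 1 \<omega> m \<partial>M)
     \<le> 1 / 2 * (\<integral>\<omega>. 1 * f 1 \<omega> a \<partial>M) + (1 - 1 / 2) * (\<integral>\<omega>. 1 * f 1 \<omega> b \<partial>M)
        - \<alpha> / 2 * (1 / 2) * (1 - 1 / 2) * (\<integral>\<omega>. 1 * (N (a - b))\<^sup>2 \<partial>M)"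
    unfolding m_def by (rule weighted_strong_convexity[OF _ a b _ _ one]) auto
  have Nm: "N (a - m) = N (a - b) / 2" "N (b - m) = N (a - b) / 2"
  proof -
    have "a - m = (1 / 2 :: real) *\<^sub>R (a - b)" "b - m = (- 1 / 2 :: real) *\<^sub>R (a - b)"
      unfolding m_def by (simp_all add: vec_eq_iff field_simps)
    then show "N (a - m) = N (a - b) / 2" "N (b - m) = N (a - b) / 2"
      by (simp_all only: N_scaleR)
  qed
  have i: "integrable M (\<lambda>\<omega>. f 1 \<omega> a)" "integrable M (\<lambda>\<omega>. f 1 \<omega> b)" "integrable M (\<lambda>\<omega>. f 1 \<omega> m)"
    using f_integrable a b mH by auto
  have "(\<integral>\<omega>. 1 / 2 * f 1 \<omega> a + 1 / 2 * f 1 \<omega> b - f 1 \<omega> m \<partial>M) \<le> (\<integral>\<omega>. L / 2 * N (a - b) \<partial>M)"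
  proof (rule integral_mono_AE)
    show "AE \<omega> in M. 1 / 2 * f 1 \<omega> a + 1 / 2 * f 1 \<omega> b - f 1 \<omega> m \<le> L / 2 * N (a - b)"
      using f_Lipschitz[OF order_refl]
    proof eventually_elim
      case (elim \<omega>)
      then have "\<bar>f 1 \<omega> a - f 1 \<omega> m\<bar> \<le> L * N (a - m)" "\<bar>f 1 \<omega> b - f 1 \<omega> m\<bar> \<le> L * N (b - m)"
        using a b mH by auto
      then show ?case unfolding Nm abs_le_iff by (simp add: field_simps)
    qed
  qed (use i in auto)
  with sc i show ?thesis by (simp add: prob_space)
qed

lemma L_pos_if_distinct:
  assumes "a \<in> H" "b \<in> H" "a \<noteq> b"
  shows "L > 0"
proof -
  have pos: "N (a - b) > 0" using N_nonneg[of "a - b"] N_eq_zero_iff[of "a - b"] assms(3) by simp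
  have "\<alpha> / 8 * N (a - b) * N (a - b) \<le> L / 2 * N (a - b)"
    using strong_convexity_le_Lipschitz[OF assms(1,2)] by (simp add: power2_eq_square)
  then have "\<alpha> / 8 * N (a - b) \<le> L / 2" using pos by simp
  moreover have "\<alpha> / 8 * N (a - b) > 0" using alpha_pos pos by simp
  ultimately show ?thesis by linarith
qed

definition "regret_bounded \<delta> \<omega> \<longleftrightarrow> (\<forall>T::nat.
   (\<Sum>t=1..T. f t \<omega> (w t \<omega>) - f t \<omega> (u \<omega>))
     \<le> (\<Sum>t=1..T. (w t \<omega> - u \<omega>) \<bullet> grad t \<omega> (w t \<omega>) - \<alpha> / 4 * (N (w t \<omega> - u \<omega>))\<^sup>2)
       + 8 * L\<^sup>2 * ln (1 / \<delta>) / \<alpha>)"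

lemma regret_bounded_if_L_nonpos:
  assumes "L \<le> 0" "0 < \<delta>" "\<delta> < 1" "\<omega> \<in> space M"
  shows "regret_bounded \<delta> \<omega>"
  unfolding regret_bounded_def
proof
  fix T :: nat
  have "w t \<omega> = u \<omega>" if "t \<in> {1..T}" for t
    using L_pos_if_distinct[OF w_in_H u_in_H] assms that by force
  moreover have "0 \<le> 8 * L\<^sup>2 * ln (1 / \<delta>) / \<alpha>" using assms alpha_pos by simp
  ultimately show "(\<Sum>t=1..T. f t \<omega> (w t \<omega>) - f t \<omega> (u \<omega>))
     \<le> (\<Sum>t=1..T. (w t \<omega> - u \<omega>) \<bullet> grad t \<omega> (w t \<omega>) - \<alpha> / 4 * (N (w t \<omega> - u \<omega>))\<^sup>2)
       + 8 * L\<^sup>2 * ln (1 / \<delta>) / \<alpha>" by (simp add: is_norm_zero[OF norm_N])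
qed

end

section \<open>Evaluation at random points\<close>

locale cond_strongly_convex_losses_pos = cond_strongly_convex_losses +
  assumes L_pos: "L > 0"
begin

definition diam_bound :: real where "diam_bound = 4 * L / \<alpha>"

lemma diam_bound_nonneg: "0 \<le> diam_bound"
  using L_pos alpha_pos by (simp add: diam_bound_def)

lemma N_le_diam_bound:
  assumes a: "a \<in> H" and b: "b \<in> H"
  shows "N (a - b) \<le> diam_bound"
proof (cases "N (a - b) = 0")
  case False
  then have pos: "N (a - b) > 0" using N_nonneg[of "a - b"] by simp
  have "\<alpha> / 8 * N (a - b) * N (a - b) \<le> L / 2 * N (a - b)"
    using strong_convexity_le_Lipschitz[OF a b] by (simp add: power2_eq_square)
  then have "\<alpha> / 8 * N (a - b) \<le> L / 2" using pos by simp
  then show ?thesis unfolding diam_bound_def using alpha_pos by (simp add: field_simps)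
qed (simp add: diam_bound_nonneg)

definition
  "random_point s z \<longleftrightarrow> z \<in> borel_measurable (F s) \<and> (\<forall>\<omega>\<in>space M. z \<omega> \<in> H)"

lemma random_pointD:
  "random_point s z \<Longrightarrow> z \<in> borel_measurable (F s)"
  "random_point s z \<Longrightarrow> \<omega> \<in> space M \<Longrightarrow> z \<omega> \<in> H"
  unfolding random_point_def by auto

lemma random_point_mono: "s \<le> t \<Longrightarrow> random_point s z \<Longrightarrow> random_point t z"
  unfolding random_point_def using measurable_F_mono by blast

lemma random_point_u: "random_point s u"
  unfolding random_point_def using u_measurable_F u_in_H by blast

lemma random_point_w: "t \<ge> 1 \<Longrightarrow> random_point (t - 1) (w t)"
  unfolding random_point_def using w_measurable w_in_H by blast

lemma random_point_convex_comb:
  assumes "random_point s x" "random_point s y" "0 \<le> \<theta>" "\<theta> \<le> 1"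
  shows "random_point s (\<lambda>\<omega>. \<theta> *\<^sub>R x \<omega> + (1 - \<theta>) *\<^sub>R y \<omega>)"
  using assms convex_H unfolding random_point_def by (auto intro: convexD)

definition
  "dense_seq = from_nat_into (SOME T. countable T \<and> T \<subseteq> H \<and> H \<subseteq> closure T)"

lemma dense_seq: "range dense_seq \<subseteq> H" "H \<subseteq> closure (range dense_seq)"
proof -
  define T where "T = (SOME T. countable T \<and> T \<subseteq> H \<and> H \<subseteq> closure T)"
  have "\<exists>T. countable T \<and> T \<subseteq> H \<and> H \<subseteq> closure T" by (metis separable)
  then have T: "countable T" "T \<subseteq> H" "H \<subseteq> closure T"
    unfolding T_def by (metis (mono_tags, lifting) someI_ex)+
  have "T \<noteq> {}" using T(3) u_in_H not_empty by auto
  then have "range dense_seq = T"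
    unfolding dense_seq_def T_def[symmetric] using T(1) by (rule range_from_nat_into)
  then show "range dense_seq \<subseteq> H" "H \<subseteq> closure (range dense_seq)" using T by auto
qed

lemma dense_seq_in_H: "dense_seq n \<in> H"
  using dense_seq(1) by auto

definition
  "approx z n \<omega> = dense_seq (nearest_index dense_seq (z \<omega>) n)"

lemma approx_tendsto: "z \<omega> \<in> H \<Longrightarrow> (\<lambda>n. approx z n \<omega>) \<longlonglongrightarrow> z \<omega>"
  unfolding approx_def
  using dense_seq(2) by (intro tendsto_nearest_index) (auto simp: closure_approachable)

lemma measurable_approx_index:
  "random_point s z \<Longrightarrow> (\<lambda>\<omega>. nearest_index dense_seq (z \<omega>) n) \<in> measurable (F s) (count_space UNIV)"
  by (intro measurable_nearest_index random_pointD)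

lemma random_point_approx: "random_point s z \<Longrightarrow> random_point s (approx z n)"
  unfolding random_point_def approx_def using dense_seq(1)
  by (auto intro: measurable_compose_countable[OF measurable_const measurable_nearest_index])

lemma isCont_f: "t \<ge> 1 \<Longrightarrow> \<omega> \<in> space M \<Longrightarrow> isCont (f t \<omega>) x"
  using has_derivative_continuous[OF has_derivative_f] by blast

lemma measurable_f_random_point:
  assumes t: "t \<ge> 1" and z: "random_point t z"
  shows "(\<lambda>\<omega>. f t \<omega> (z \<omega>)) \<in> borel_measurable (F t)"
proof (rule borel_measurable_LIMSEQ_real)
  show "(\<lambda>\<omega>. f t \<omega> (approx z n \<omega>)) \<in> borel_measurable (F t)" for n
    unfolding approx_def
    by (rule measurable_compose_countable[where f="\<lambda>i \<omega>. f t \<omega> (dense_seq i)",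
          OF f_measurable[OF t] measurable_approx_index[OF z]])
  show "(\<lambda>n. f t \<omega> (approx z n \<omega>)) \<longlonglongrightarrow> f t \<omega> (z \<omega>)" if "\<omega> \<in> space (F t)" for \<omega>
    using that space_F random_pointD(2)[OF z] approx_tendsto isCont_f[OF t] isCont_tendsto_compose
    by metis
qed

definition
  "Lipschitz_at t \<omega> \<longleftrightarrow> (\<forall>x\<in>H. \<forall>y\<in>H. \<bar>f t \<omega> x - f t \<omega> y\<bar> \<le> L * N (x - y))"

lemma AE_Lipschitz_at: "t \<ge> 1 \<Longrightarrow> AE \<omega> in M. Lipschitz_at t \<omega>"
  unfolding Lipschitz_at_def by (rule f_Lipschitz)

lemma f_bounded_on_H:
  assumes "Lipschitz_at t \<omega>" "z \<in> H"
  shows "\<bar>f t \<omega> z\<bar> \<le> \<bar>f t \<omega> (dense_seq 0)\<bar> + L * diam_bound"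
proof -
  have "\<bar>f t \<omega> z - f t \<omega> (dense_seq 0)\<bar> \<le> L * N (z - dense_seq 0)"
    using assms dense_seq_in_H unfolding Lipschitz_at_def by blast
  also have "\<dots> \<le> L * diam_bound"
    using N_le_diam_bound[OF assms(2) dense_seq_in_H] L_pos by simp
  finally show ?thesis by linarith
qed

lemma integrable_f_envelope: "t \<ge> 1 \<Longrightarrow> integrable M (\<lambda>\<omega>. \<bar>f t \<omega> (dense_seq 0)\<bar> + L * diam_bound)"
  by (intro Bochner_Integration.integrable_add integrable_abs f_integrable[OF _ dense_seq_in_H]) auto

lemma integrable_weight_f_random_point:
  assumes t: "t \<ge> 1" and z: "random_point t z" and V: "bounded_weight (F s) V"
  shows "integrable M (\<lambda>\<omega>. V \<omega> * f t \<omega> (z \<omega>))"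
proof -
  obtain B where VM: "V \<in> borel_measurable M" and Vb: "\<And>\<omega>. \<omega> \<in> space M \<Longrightarrow> 0 \<le> V \<omega> \<and> V \<omega> \<le> B"
    using V space_F measurable_from_F by (metis bounded_weightE)
  show ?thesis
  proof (rule Bochner_Integration.integrable_bound[OF integrable_mult_right[OF integrable_f_envelope[OF t], of B]])
    show "(\<lambda>\<omega>. V \<omega> * f t \<omega> (z \<omega>)) \<in> borel_measurable M"
      using VM measurable_from_F[OF measurable_f_random_point[OF t z]] by simp
    show "AE \<omega> in M. norm (V \<omega> * f t \<omega> (z \<omega>)) \<le> norm (B * (\<bar>f t \<omega> (dense_seq 0)\<bar> + L * diam_bound))"
      using AE_space AE_Lipschitz_at[OF t]
    proof eventually_elim
      case (elim \<omega>)
      have "\<bar>V \<omega>\<bar> * \<bar>f t \<omega> (z \<omega>)\<bar> \<le> B * (\<bar>f t \<omega> (dense_seq 0)\<bar> + L * diam_bound)"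
        using f_bounded_on_H[OF elim(2) random_pointD(2)[OF z elim(1)]] Vb[OF elim(1)]
        by (intro mult_mono) auto
      moreover have "0 \<le> B" using Vb[OF elim(1)] by linarith
      ultimately show ?case using L_pos diam_bound_nonneg by (simp add: abs_mult)
    qed
  qed
qed

lemma tendsto_integral_f_random_point:
  assumes t: "t \<ge> 1" and z: "random_point t z" and zn: "\<And>n. random_point t (zn n)"
    and lim: "\<And>\<omega>. \<omega> \<in> space M \<Longrightarrow> (\<lambda>n. zn n \<omega>) \<longlonglongrightarrow> z \<omega>"
    and V: "bounded_weight (F s) V"
  shows "(\<lambda>n. \<integral>\<omega>. V \<omega> * f t \<omega> (zn n \<omega>) \<partial>M) \<longlonglongrightarrow> (\<integral>\<omega>. V \<omega> * f t \<omega> (z \<omega>) \<partial>M)"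
proof -
  obtain B where VM: "V \<in> borel_measurable M" and Vb: "\<And>\<omega>. \<omega> \<in> space M \<Longrightarrow> 0 \<le> V \<omega> \<and> V \<omega> \<le> B"
    using V space_F measurable_from_F by (metis bounded_weightE)
  show ?thesis
  proof (rule integral_dominated_convergence[OF _ _ integrable_mult_right[OF integrable_f_envelope[OF t], of B]])
    show "(\<lambda>\<omega>. V \<omega> * f t \<omega> (z \<omega>)) \<in> borel_measurable M"
      using VM measurable_from_F[OF measurable_f_random_point[OF t z]] by simp
    show "(\<lambda>\<omega>. V \<omega> * f t \<omega> (zn n \<omega>)) \<in> borel_measurable M" for n
      using VM measurable_from_F[OF measurable_f_random_point[OF t zn]] by simp
    show "AE \<omega> in M. (\<lambda>n. V \<omega> * f t \<omega> (zn n \<omega>)) \<longlonglongrightarrow> V \<omega> * f t \<omega> (z \<omega>)"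
      using AE_space
      by eventually_elim (intro tendsto_mult_left isCont_tendsto_compose[OF isCont_f[OF t]] lim)
    show "AE \<omega> in M. norm (V \<omega> * f t \<omega> (zn n \<omega>)) \<le> B * (\<bar>f t \<omega> (dense_seq 0)\<bar> + L * diam_bound)" for n
      using AE_space AE_Lipschitz_at[OF t]
    proof eventually_elim
      case (elim \<omega>)
      have "\<bar>V \<omega>\<bar> * \<bar>f t \<omega> (zn n \<omega>)\<bar> \<le> B * (\<bar>f t \<omega> (dense_seq 0)\<bar> + L * diam_bound)"
        using f_bounded_on_H[OF elim(2) random_pointD(2)[OF zn elim(1)]] Vb[OF elim(1)]
        by (intro mult_mono) auto
      then show ?case by (simp add: abs_mult)
    qed
  qed
qed

lemma tendsto_integral_N_random_points:
  assumes x: "random_point s x" and y: "random_point s y"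
    and xn: "\<And>n. random_point s (xn n)" and yn: "\<And>n. random_point s (yn n)"
    and lim: "\<And>\<omega>. \<omega> \<in> space M \<Longrightarrow> (\<lambda>n. xn n \<omega>) \<longlonglongrightarrow> x \<omega>"
      "\<And>\<omega>. \<omega> \<in> space M \<Longrightarrow> (\<lambda>n. yn n \<omega>) \<longlonglongrightarrow> y \<omega>"
    and V: "bounded_weight (F s) V"
  shows "(\<lambda>n. \<integral>\<omega>. V \<omega> * (N (xn n \<omega> - yn n \<omega>))\<^sup>2 \<partial>M) \<longlonglongrightarrow> (\<integral>\<omega>. V \<omega> * (N (x \<omega> - y \<omega>))\<^sup>2 \<partial>M)"
proof -
  obtain B where VM: "V \<in> borel_measurable M" and Vb: "\<And>\<omega>. \<omega> \<in> space M \<Longrightarrow> 0 \<le> V \<omega> \<and> V \<omega> \<le> B"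
    using V space_F measurable_from_F by (metis bounded_weightE)
  have meas: "(\<lambda>\<omega>. V \<omega> * (N (a \<omega> - b \<omega>))\<^sup>2) \<in> borel_measurable M"
    if "random_point s a" "random_point s b" for a b
    using VM measurable_compose[OF borel_measurable_diff[OF measurable_from_F measurable_from_F]
        borel_measurable_N] random_pointD(1)[OF that(1)] random_pointD(1)[OF that(2)]
    by measurable
  show ?thesis
  proof (rule integral_dominated_convergence[where w="\<lambda>\<omega>. B * diam_bound\<^sup>2"])
    show "AE \<omega> in M. (\<lambda>n. V \<omega> * (N (xn n \<omega> - yn n \<omega>))\<^sup>2) \<longlonglongrightarrow> V \<omega> * (N (x \<omega> - y \<omega>))\<^sup>2"
      using AE_space
    proof eventually_elim
      case (elim \<omega>)
      have "isCont N (x \<omega> - y \<omega>)"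
        using lipschitz_on_continuous_on[OF is_norm_lipschitz[OF norm_N]]
        by (simp add: continuous_on_eq_continuous_at)
      then show ?case
        by (intro tendsto_mult_left tendsto_power isCont_tendsto_compose[where g=N] tendsto_diff lim elim)
    qed
    show "AE \<omega> in M. norm (V \<omega> * (N (xn n \<omega> - yn n \<omega>))\<^sup>2) \<le> B * diam_bound\<^sup>2" for n
    proof (rule AE_I2)
      fix \<omega> assume \<omega>: "\<omega> \<in> space M"
      have "(N (xn n \<omega> - yn n \<omega>))\<^sup>2 \<le> diam_bound\<^sup>2"
        using N_le_diam_bound random_pointD(2)[OF xn \<omega>] random_pointD(2)[OF yn \<omega>] N_nonneg
        by (intro power_mono) auto
      then show "norm (V \<omega> * (N (xn n \<omega> - yn n \<omega>))\<^sup>2) \<le> B * diam_bound\<^sup>2"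
        using Vb[OF \<omega>] by (simp add: abs_mult mult_mono)
    qed
  qed (use meas x y xn yn in auto)
qed

lemma weighted_strong_convexity_approx:
  assumes t: "t \<ge> 1" and \<theta>: "0 \<le> \<theta>" "\<theta> \<le> 1"
    and x: "random_point (t - 1) x" and y: "random_point (t - 1) y"
    and V: "bounded_weight (F (t - 1)) V"
  shows "(\<integral>\<omega>. V \<omega> * f t \<omega> (\<theta> *\<^sub>R approx x n \<omega> + (1 - \<theta>) *\<^sub>R approx y n \<omega>) \<partial>M)
     \<le> \<theta> * (\<integral>\<omega>. V \<omega> * f t \<omega> (approx x n \<omega>) \<partial>M) + (1 - \<theta>) * (\<integral>\<omega>. V \<omega> * f t \<omega> (approx y n \<omega>) \<partial>M)
        - \<alpha> / 2 * \<theta> * (1 - \<theta>) * (\<integral>\<omega>. V \<omega> * (N (approx x n \<omega> - approx y n \<omega>))\<^sup>2 \<partial>M)"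
proof -
  define \<kappa> where "\<kappa> \<omega> = (nearest_index dense_seq (x \<omega>) n, nearest_index dense_seq (y \<omega>) n)" for \<omega>
  define I where "I = {..n} \<times> {..n}"
  define Vp where "Vp p \<omega> = (if \<kappa> \<omega> = p then V \<omega> else 0)" for p \<omega>
  define a where "a p = dense_seq (fst p)" for p :: "nat \<times> nat"
  define b where "b p = dense_seq (snd p)" for p :: "nat \<times> nat"
  have approx_\<kappa>: "approx x n \<omega> = a (\<kappa> \<omega>)" "approx y n \<omega> = b (\<kappa> \<omega>)" for \<omega>
    by (simp_all add: approx_def a_def b_def \<kappa>_def)
  have I: "finite I" "\<And>\<omega>. \<kappa> \<omega> \<in> I" by (auto simp: I_def \<kappa>_def nearest_index_le)
  have Vp: "bounded_weight (F (t - 1)) (Vp p)" for p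
  proof -
    have "{\<omega> \<in> space (F (t - 1)). \<kappa> \<omega> = p}
        = {\<omega> \<in> space (F (t - 1)). nearest_index dense_seq (x \<omega>) n = fst p}
          \<inter> {\<omega> \<in> space (F (t - 1)). nearest_index dense_seq (y \<omega>) n = snd p}"
      by (auto simp: \<kappa>_def)
    also have "\<dots> \<in> sets (F (t - 1))"
      using measurable_approx_index[OF x] measurable_approx_index[OF y] by measurable
    finally show ?thesis unfolding Vp_def by (rule bounded_weight_restrict[OF V])
  qed
  have int_f: "integrable M (\<lambda>\<omega>. Vp p \<omega> * f t \<omega> z)" if "z \<in> H" for p z
    using integrable_bounded_weight_mult[OF subalgebra_F Vp f_integrable[OF t that]] .
  have int_N: "integrable M (\<lambda>\<omega>. Vp p \<omega> * c)" for p c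
    using integrable_bounded_weight[OF subalgebra_F Vp] by simp
  have split: "(\<integral>\<omega>. V \<omega> * h (\<kappa> \<omega>) \<omega> \<partial>M) = (\<Sum>p\<in>I. \<integral>\<omega>. Vp p \<omega> * h p \<omega> \<partial>M)"
    if "\<And>p. integrable M (\<lambda>\<omega>. Vp p \<omega> * h p \<omega>)" for h
    unfolding Vp_def using I that[unfolded Vp_def] by (rule integral_split_finite_index)
  have H: "a p \<in> H" "b p \<in> H" "\<theta> *\<^sub>R a p + (1 - \<theta>) *\<^sub>R b p \<in> H" for p
    using dense_seq_in_H convex_H \<theta> by (auto simp: a_def b_def intro: convexD)
  have split_f: "(\<integral>\<omega>. V \<omega> * f t \<omega> (c (\<kappa> \<omega>)) \<partial>M) = (\<Sum>p\<in>I. \<integral>\<omega>. Vp p \<omega> * f t \<omega> (c p) \<partial>M)"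
    if "\<And>p. c p \<in> H" for c
    using split[of "\<lambda>p \<omega>. f t \<omega> (c p)"] int_f[OF that] by simp
  have split_N: "(\<integral>\<omega>. V \<omega> * (N (a (\<kappa> \<omega>) - b (\<kappa> \<omega>)))\<^sup>2 \<partial>M)
      = (\<Sum>p\<in>I. \<integral>\<omega>. Vp p \<omega> * (N (a p - b p))\<^sup>2 \<partial>M)"
    using split[of "\<lambda>p \<omega>. (N (a p - b p))\<^sup>2"] int_N by simp
  have "(\<integral>\<omega>. V \<omega> * f t \<omega> (\<theta> *\<^sub>R approx x n \<omega> + (1 - \<theta>) *\<^sub>R approx y n \<omega>) \<partial>M)
      = (\<Sum>p\<in>I. \<integral>\<omega>. Vp p \<omega> * f t \<omega> (\<theta> *\<^sub>R a p + (1 - \<theta>) *\<^sub>R b p) \<partial>M)"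
    unfolding approx_\<kappa> using split_f[of "\<lambda>p. \<theta> *\<^sub>R a p + (1 - \<theta>) *\<^sub>R b p"] H(3) by simp
  also have "\<dots> \<le> (\<Sum>p\<in>I. \<theta> * (\<integral>\<omega>. Vp p \<omega> * f t \<omega> (a p) \<partial>M) + (1 - \<theta>) * (\<integral>\<omega>. Vp p \<omega> * f t \<omega> (b p) \<partial>M)
        - \<alpha> / 2 * \<theta> * (1 - \<theta>) * (\<integral>\<omega>. Vp p \<omega> * (N (a p - b p))\<^sup>2 \<partial>M))"
    using weighted_strong_convexity[OF t H(1) H(2) \<theta> Vp] by (rule sum_mono)
  also have "\<dots> = \<theta> * (\<Sum>p\<in>I. \<integral>\<omega>. Vp p \<omega> * f t \<omega> (a p) \<partial>M) + (1 - \<theta>) * (\<Sum>p\<in>I. \<integral>\<omega>. Vp p \<omega> * f t \<omega> (b p) \<partial>M)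
        - \<alpha> / 2 * \<theta> * (1 - \<theta>) * (\<Sum>p\<in>I. \<integral>\<omega>. Vp p \<omega> * (N (a p - b p))\<^sup>2 \<partial>M)"
    by (simp add: sum_distrib_left sum.distrib sum_subtractf)
  also have "\<dots> = \<theta> * (\<integral>\<omega>. V \<omega> * f t \<omega> (approx x n \<omega>) \<partial>M) + (1 - \<theta>) * (\<integral>\<omega>. V \<omega> * f t \<omega> (approx y n \<omega>) \<partial>M)
        - \<alpha> / 2 * \<theta> * (1 - \<theta>) * (\<integral>\<omega>. V \<omega> * (N (approx x n \<omega> - approx y n \<omega>))\<^sup>2 \<partial>M)"
    unfolding approx_\<kappa> split_N split_f[of a, OF H(1)] split_f[of b, OF H(2)] ..
  finally show ?thesis .
qed

lemma weighted_strong_convexity_random: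
  assumes t: "t \<ge> 1" and \<theta>: "0 \<le> \<theta>" "\<theta> \<le> 1"
    and x: "random_point (t - 1) x" and y: "random_point (t - 1) y"
    and V: "bounded_weight (F (t - 1)) V"
  shows "(\<integral>\<omega>. V \<omega> * f t \<omega> (\<theta> *\<^sub>R x \<omega> + (1 - \<theta>) *\<^sub>R y \<omega>) \<partial>M)
     \<le> \<theta> * (\<integral>\<omega>. V \<omega> * f t \<omega> (x \<omega>) \<partial>M) + (1 - \<theta>) * (\<integral>\<omega>. V \<omega> * f t \<omega> (y \<omega>) \<partial>M)
        - \<alpha> / 2 * \<theta> * (1 - \<theta>) * (\<integral>\<omega>. V \<omega> * (N (x \<omega> - y \<omega>))\<^sup>2 \<partial>M)"
proof -
  have up: "random_point t z" if "random_point (t - 1) z" for z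
    using random_point_mono[of "t - 1" t z] that by simp
  have xn: "random_point (t - 1) (approx x n)" and yn: "random_point (t - 1) (approx y n)" for n
    using random_point_approx[OF x] random_point_approx[OF y] .
  have lim: "\<And>\<omega>. \<omega> \<in> space M \<Longrightarrow> (\<lambda>n. approx x n \<omega>) \<longlonglongrightarrow> x \<omega>"
      "\<And>\<omega>. \<omega> \<in> space M \<Longrightarrow> (\<lambda>n. approx y n \<omega>) \<longlonglongrightarrow> y \<omega>"
    using approx_tendsto[of x, OF random_pointD(2)[OF x]] approx_tendsto[of y, OF random_pointD(2)[OF y]]
    by auto
  have comb: "random_point (t - 1) (\<lambda>\<omega>. \<theta> *\<^sub>R a \<omega> + (1 - \<theta>) *\<^sub>R b \<omega>)"
    if "random_point (t - 1) a" "random_point (t - 1) b" for a b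
    using random_point_convex_comb[OF that \<theta>] .
  have lim_lhs: "(\<lambda>n. \<integral>\<omega>. V \<omega> * f t \<omega> (\<theta> *\<^sub>R approx x n \<omega> + (1 - \<theta>) *\<^sub>R approx y n \<omega>) \<partial>M)
      \<longlonglongrightarrow> (\<integral>\<omega>. V \<omega> * f t \<omega> (\<theta> *\<^sub>R x \<omega> + (1 - \<theta>) *\<^sub>R y \<omega>) \<partial>M)"
    using lim by (intro tendsto_integral_f_random_point[OF t up[OF comb[OF x y]] up[OF comb[OF xn yn]] _ V]
        tendsto_add tendsto_scaleR tendsto_const)
  have lim_rhs: "(\<lambda>n. \<theta> * (\<integral>\<omega>. V \<omega> * f t \<omega> (approx x n \<omega>) \<partial>M) + (1 - \<theta>) * (\<integral>\<omega>. V \<omega> * f t \<omega> (approx y n \<omega>) \<partial>M)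
        - \<alpha> / 2 * \<theta> * (1 - \<theta>) * (\<integral>\<omega>. V \<omega> * (N (approx x n \<omega> - approx y n \<omega>))\<^sup>2 \<partial>M))
      \<longlonglongrightarrow> \<theta> * (\<integral>\<omega>. V \<omega> * f t \<omega> (x \<omega>) \<partial>M) + (1 - \<theta>) * (\<integral>\<omega>. V \<omega> * f t \<omega> (y \<omega>) \<partial>M)
        - \<alpha> / 2 * \<theta> * (1 - \<theta>) * (\<integral>\<omega>. V \<omega> * (N (x \<omega> - y \<omega>))\<^sup>2 \<partial>M)"
    by (intro tendsto_diff tendsto_add tendsto_mult_left
        tendsto_integral_f_random_point[OF t up[OF x] up[OF xn] lim(1) V]
        tendsto_integral_f_random_point[OF t up[OF y] up[OF yn] lim(2) V]
        tendsto_integral_N_random_points[OF x y xn yn lim V])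
  show ?thesis
    using weighted_strong_convexity_approx[OF assms] by (intro LIMSEQ_le[OF lim_lhs lim_rhs]) auto
qed

section \<open>The conditional drift of the excess\<close>

lemma difference_quotient_tendsto:
  "t \<ge> 1 \<Longrightarrow> \<omega> \<in> space M \<Longrightarrow>
    (\<lambda>n. (f t \<omega> (shrink n *\<^sub>R y + (1 - shrink n) *\<^sub>R x) - f t \<omega> x) / shrink n)
      \<longlonglongrightarrow> grad t \<omega> x \<bullet> (y - x)"
  using shrink_pos by (intro tendsto_difference_quotient has_derivative_f shrink_tendsto_0) (auto simp: less_imp_neq[symmetric])

lemma difference_quotient_bound:
  assumes "Lipschitz_at t \<omega>" and x: "x \<in> H" and y: "y \<in> H" and s: "0 < s" "s \<le> 1"
  shows "\<bar>(f t \<omega> (s *\<^sub>R y + (1 - s) *\<^sub>R x) - f t \<omega> x) / s\<bar> \<le> L * N (y - x)"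
proof -
  have "s *\<^sub>R y + (1 - s) *\<^sub>R x \<in> H" using convex_H x y s by (intro convexD) auto
  moreover have "s *\<^sub>R y + (1 - s) *\<^sub>R x - x = s *\<^sub>R (y - x)" by (simp add: algebra_simps)
  ultimately have "\<bar>f t \<omega> (s *\<^sub>R y + (1 - s) *\<^sub>R x) - f t \<omega> x\<bar> \<le> L * N (s *\<^sub>R (y - x))"
    using assms(1) x unfolding Lipschitz_at_def by metis
  also have "\<dots> = s * (L * N (y - x))" using s by (simp add: N_scaleR)
  finally show ?thesis using s by (simp add: abs_div pos_divide_le_eq mult.commute)
qed

lemma directional_derivative_bound:
  assumes t: "t \<ge> 1" and \<omega>: "\<omega> \<in> space M" and Lip: "Lipschitz_at t \<omega>" and x: "x \<in> H" and y: "y \<in> H"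
  shows "\<bar>grad t \<omega> x \<bullet> (y - x)\<bar> \<le> L * N (y - x)"
  using difference_quotient_bound[OF Lip x y shrink_pos shrink_le_1]
  by (intro tendsto_le[OF sequentially_bot tendsto_const tendsto_rabs[OF difference_quotient_tendsto[OF t \<omega>]]])
     (auto intro: always_eventually)

lemma measurable_directional_derivative:
  assumes t: "t \<ge> 1"
  shows "(\<lambda>\<omega>. grad t \<omega> (w t \<omega>) \<bullet> (u \<omega> - w t \<omega>)) \<in> borel_measurable (F t)"
proof (rule borel_measurable_LIMSEQ_real)
  have up: "random_point t z" if "random_point (t - 1) z" for z
    using random_point_mono[of "t - 1" t z] that by simp
  have p: "random_point t (\<lambda>\<omega>. shrink n *\<^sub>R u \<omega> + (1 - shrink n) *\<^sub>R w t \<omega>)" for n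
    using shrink_pos[of n] shrink_le_1[of n]
    by (intro up random_point_convex_comb random_point_u random_point_w[OF t]) auto
  show "(\<lambda>\<omega>. (f t \<omega> (shrink n *\<^sub>R u \<omega> + (1 - shrink n) *\<^sub>R w t \<omega>) - f t \<omega> (w t \<omega>)) / shrink n)
      \<in> borel_measurable (F t)" for n
    using measurable_f_random_point[OF t p] measurable_f_random_point[OF t up[OF random_point_w[OF t]]]
    by measurable
  show "(\<lambda>n. (f t \<omega> (shrink n *\<^sub>R u \<omega> + (1 - shrink n) *\<^sub>R w t \<omega>) - f t \<omega> (w t \<omega>)) / shrink n)
      \<longlonglongrightarrow> grad t \<omega> (w t \<omega>) \<bullet> (u \<omega> - w t \<omega>)" if "\<omega> \<in> space (F t)" for \<omega>
    using difference_quotient_tendsto[OF t] that space_F by simp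
qed

lemma random_point_segment:
  "t \<ge> 1 \<Longrightarrow> random_point (t - 1) (\<lambda>\<omega>. shrink n *\<^sub>R u \<omega> + (1 - shrink n) *\<^sub>R w t \<omega>)"
  using shrink_pos[of n] shrink_le_1[of n]
  by (intro random_point_convex_comb random_point_u random_point_w) auto

lemma random_point_up: "random_point (t - 1) z \<Longrightarrow> random_point t z"
  using random_point_mono[of "t - 1" t z] by simp

lemma weighted_difference_quotients_tendsto:
  assumes t: "t \<ge> 1" and W: "bounded_weight (F s) W"
  shows "(\<lambda>n. \<integral>\<omega>. W \<omega> * ((f t \<omega> (shrink n *\<^sub>R u \<omega> + (1 - shrink n) *\<^sub>R w t \<omega>) - f t \<omega> (w t \<omega>)) / shrink n) \<partial>M)
           \<longlonglongrightarrow> (\<integral>\<omega>. W \<omega> * (grad t \<omega> (w t \<omega>) \<bullet> (u \<omega> - w t \<omega>)) \<partial>M)"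
    and "integrable M (\<lambda>\<omega>. W \<omega> * (grad t \<omega> (w t \<omega>) \<bullet> (u \<omega> - w t \<omega>)))"
proof -
  obtain B where WM: "W \<in> borel_measurable M" and Wb: "\<And>\<omega>. \<omega> \<in> space M \<Longrightarrow> 0 \<le> W \<omega> \<and> W \<omega> \<le> B"
    using W space_F measurable_from_F by (metis bounded_weightE)
  define q where "q n \<omega> = W \<omega> * ((f t \<omega> (shrink n *\<^sub>R u \<omega> + (1 - shrink n) *\<^sub>R w t \<omega>) - f t \<omega> (w t \<omega>)) / shrink n)"
    for n \<omega>
  have q: "q n \<in> borel_measurable M" for n
    unfolding q_def using WM
      measurable_from_F[OF measurable_f_random_point[OF t random_point_up[OF random_point_segment[OF t]]]]
      measurable_from_F[OF measurable_f_random_point[OF t random_point_up[OF random_point_w[OF t]]]]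
    by measurable
  have G: "(\<lambda>\<omega>. W \<omega> * (grad t \<omega> (w t \<omega>) \<bullet> (u \<omega> - w t \<omega>))) \<in> borel_measurable M"
    using WM measurable_from_F[OF measurable_directional_derivative[OF t]] by measurable
  have lim: "AE \<omega> in M. (\<lambda>n. q n \<omega>) \<longlonglongrightarrow> W \<omega> * (grad t \<omega> (w t \<omega>) \<bullet> (u \<omega> - w t \<omega>))"
    using AE_space by eventually_elim (unfold q_def, intro tendsto_mult_left difference_quotient_tendsto[OF t])
  have bound: "AE \<omega> in M. norm (q n \<omega>) \<le> B * (L * diam_bound)" for n
    using AE_space AE_Lipschitz_at[OF t]
  proof eventually_elim
    case (elim \<omega>)
    have "\<bar>(f t \<omega> (shrink n *\<^sub>R u \<omega> + (1 - shrink n) *\<^sub>R w t \<omega>) - f t \<omega> (w t \<omega>)) / shrink n\<bar>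
        \<le> L * N (u \<omega> - w t \<omega>)"
      using difference_quotient_bound[OF elim(2) w_in_H[OF t elim(1)] u_in_H[OF elim(1)] shrink_pos shrink_le_1] .
    also have "\<dots> \<le> L * diam_bound"
      using N_le_diam_bound[OF u_in_H[OF elim(1)] w_in_H[OF t elim(1)]] L_pos by simp
    finally have "\<bar>W \<omega>\<bar> * \<bar>(f t \<omega> (shrink n *\<^sub>R u \<omega> + (1 - shrink n) *\<^sub>R w t \<omega>) - f t \<omega> (w t \<omega>)) / shrink n\<bar>
        \<le> B * (L * diam_bound)"
      using Wb[OF elim(1)] by (intro mult_mono) auto
    then show ?case by (simp add: q_def abs_mult)
  qed
  show "(\<lambda>n. \<integral>\<omega>. W \<omega> * ((f t \<omega> (shrink n *\<^sub>R u \<omega> + (1 - shrink n) *\<^sub>R w t \<omega>) - f t \<omega> (w t \<omega>)) / shrink n) \<partial>M)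
           \<longlonglongrightarrow> (\<integral>\<omega>. W \<omega> * (grad t \<omega> (w t \<omega>) \<bullet> (u \<omega> - w t \<omega>)) \<partial>M)"
    using integral_dominated_convergence[OF G q _ lim bound] by (simp add: q_def)
  show "integrable M (\<lambda>\<omega>. W \<omega> * (grad t \<omega> (w t \<omega>) \<bullet> (u \<omega> - w t \<omega>)))"
    using integrable_dominated_convergence[OF G q _ lim bound] by simp
qed

definition "excess t \<omega> = f t \<omega> (w t \<omega>) - f t \<omega> (u \<omega>) - (w t \<omega> - u \<omega>) \<bullet> grad t \<omega> (w t \<omega>)"

definition "distance t \<omega> = N (w t \<omega> - u \<omega>)"

lemma measurable_excess: "t \<ge> 1 \<Longrightarrow> excess t \<in> borel_measurable (F t)"
proof -
  assume t: "t \<ge> 1"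
  have "excess t = (\<lambda>\<omega>. f t \<omega> (w t \<omega>) - f t \<omega> (u \<omega>) + grad t \<omega> (w t \<omega>) \<bullet> (u \<omega> - w t \<omega>))"
    unfolding excess_def by (auto simp: fun_eq_iff inner_commute inner_diff_left inner_diff_right)
  then show ?thesis
    using measurable_f_random_point[OF t random_point_up[OF random_point_w[OF t]]]
      measurable_f_random_point[OF t random_point_u] measurable_directional_derivative[OF t]
    by simp
qed

lemma measurable_distance: "t \<ge> 1 \<Longrightarrow> distance t \<in> borel_measurable (F (t - 1))"
  unfolding distance_def
  using measurable_compose[OF borel_measurable_diff[OF w_measurable u_measurable_F] borel_measurable_N] .

lemma distance_bounds: "t \<ge> 1 \<Longrightarrow> \<omega> \<in> space M \<Longrightarrow> 0 \<le> distance t \<omega> \<and> distance t \<omega> \<le> diam_bound"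
  unfolding distance_def using N_nonneg N_le_diam_bound w_in_H u_in_H by auto

lemma excess_bound:
  assumes t: "t \<ge> 1" and \<omega>: "\<omega> \<in> space M" and Lip: "Lipschitz_at t \<omega>"
  shows "\<bar>excess t \<omega>\<bar> \<le> 2 * L * distance t \<omega>"
proof -
  have "\<bar>f t \<omega> (w t \<omega>) - f t \<omega> (u \<omega>)\<bar> \<le> L * N (w t \<omega> - u \<omega>)"
    using Lip w_in_H[OF t \<omega>] u_in_H[OF \<omega>] unfolding Lipschitz_at_def by blast
  moreover have "\<bar>grad t \<omega> (w t \<omega>) \<bullet> (u \<omega> - w t \<omega>)\<bar> \<le> L * N (u \<omega> - w t \<omega>)"
    by (rule directional_derivative_bound[OF t \<omega> Lip w_in_H[OF t \<omega>] u_in_H[OF \<omega>]])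
  moreover have "(w t \<omega> - u \<omega>) \<bullet> grad t \<omega> (w t \<omega>) = - (grad t \<omega> (w t \<omega>) \<bullet> (u \<omega> - w t \<omega>))"
    by (simp add: inner_commute inner_diff_left inner_diff_right)
  ultimately show ?thesis
    unfolding excess_def distance_def using N_minus_commute[of "w t \<omega>" "u \<omega>"] by auto
qed

text \<open>Strong convexity along the segment from \<open>w t\<close> to \<open>u\<close>, divided by the step length, tends
  to the first-order condition.\<close>
lemma weighted_excess_le:
  assumes t: "t \<ge> 1" and W: "bounded_weight (F (t - 1)) W"
  shows "(\<integral>\<omega>. W \<omega> * excess t \<omega> \<partial>M) \<le> (\<integral>\<omega>. W \<omega> * (- (\<alpha> / 2) * (distance t \<omega>)\<^sup>2) \<partial>M)"
proof -
  define p where "p n \<omega> = shrink n *\<^sub>R u \<omega> + (1 - shrink n) *\<^sub>R w t \<omega>" for n \<omega>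
  define Fp where "Fp n = (\<integral>\<omega>. W \<omega> * f t \<omega> (p n \<omega>) \<partial>M)" for n
  define Fu where "Fu = (\<integral>\<omega>. W \<omega> * f t \<omega> (u \<omega>) \<partial>M)"
  define Fw where "Fw = (\<integral>\<omega>. W \<omega> * f t \<omega> (w t \<omega>) \<partial>M)"
  define Q where "Q = (\<integral>\<omega>. W \<omega> * (distance t \<omega>)\<^sup>2 \<partial>M)"
  define G where "G = (\<integral>\<omega>. W \<omega> * (grad t \<omega> (w t \<omega>) \<bullet> (u \<omega> - w t \<omega>)) \<partial>M)"
  have iu: "integrable M (\<lambda>\<omega>. W \<omega> * f t \<omega> (u \<omega>))"
    by (rule integrable_weight_f_random_point[OF t random_point_u W])
  have iw: "integrable M (\<lambda>\<omega>. W \<omega> * f t \<omega> (w t \<omega>))"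
    by (rule integrable_weight_f_random_point[OF t random_point_up[OF random_point_w[OF t]] W])
  have ip: "integrable M (\<lambda>\<omega>. W \<omega> * f t \<omega> (p n \<omega>))" for n
    unfolding p_def by (rule integrable_weight_f_random_point[OF t random_point_up[OF random_point_segment[OF t]] W])
  have quotient: "(\<integral>\<omega>. W \<omega> * ((f t \<omega> (p n \<omega>) - f t \<omega> (w t \<omega>)) / shrink n) \<partial>M) = (Fp n - Fw) / shrink n" for n
    using ip[of n] iw by (simp add: Fp_def Fw_def right_diff_distrib diff_divide_distrib[symmetric])
  have "Fp n - Fw \<le> shrink n * (Fu - Fw - \<alpha> / 2 * (1 - shrink n) * Q)" for n
    using weighted_strong_convexity_random[OF t less_imp_le[OF shrink_pos] shrink_le_1
        random_point_u random_point_w[OF t] W]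
    by (simp add: Fp_def Fu_def Fw_def Q_def p_def distance_def N_minus_commute algebra_simps)
  then have "(Fp n - Fw) / shrink n \<le> Fu - Fw - \<alpha> / 2 * (1 - shrink n) * Q" for n
    using shrink_pos[of n] by (simp add: pos_divide_le_eq mult.commute)
  moreover have "(\<lambda>n. (Fp n - Fw) / shrink n) \<longlonglongrightarrow> G"
    using weighted_difference_quotients_tendsto(1)[OF t W] by (simp add: quotient[symmetric] p_def G_def)
  moreover have "(\<lambda>n. Fu - Fw - \<alpha> / 2 * (1 - shrink n) * Q) \<longlonglongrightarrow> Fu - Fw - \<alpha> / 2 * (1 - 0) * Q"
    by (intro tendsto_intros shrink_tendsto_0)
  ultimately have G_le: "G \<le> Fu - Fw - \<alpha> / 2 * Q"
    by (simp add: LIMSEQ_le)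
  have "(\<integral>\<omega>. W \<omega> * excess t \<omega> \<partial>M)
      = (\<integral>\<omega>. W \<omega> * f t \<omega> (w t \<omega>) - W \<omega> * f t \<omega> (u \<omega>) + W \<omega> * (grad t \<omega> (w t \<omega>) \<bullet> (u \<omega> - w t \<omega>)) \<partial>M)"
    by (intro Bochner_Integration.integral_cong)
       (auto simp: excess_def algebra_simps inner_commute inner_diff_left inner_diff_right)
  also have "\<dots> = Fw - Fu + G"
    using iu iw weighted_difference_quotients_tendsto(2)[OF t W] by (simp add: Fw_def Fu_def G_def)
  also have "\<dots> \<le> - (\<alpha> / 2) * Q" using G_le by simp
  also have "\<dots> = (\<integral>\<omega>. W \<omega> * (- (\<alpha> / 2) * (distance t \<omega>)\<^sup>2) \<partial>M)"
    by (simp add: Q_def ac_simps)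
  finally show ?thesis .
qed

lemma regret_bounded_iff:
  "regret_bounded \<delta> \<omega> \<longleftrightarrow>
    (\<forall>T. (\<Sum>t=1..T. excess t \<omega> + \<alpha> / 4 * (distance t \<omega>)\<^sup>2) \<le> 8 * L\<^sup>2 * ln (1 / \<delta>) / \<alpha>)"
proof -
  have "(\<Sum>t=1..T. f t \<omega> (w t \<omega>) - f t \<omega> (u \<omega>))
      - (\<Sum>t=1..T. (w t \<omega> - u \<omega>) \<bullet> grad t \<omega> (w t \<omega>) - \<alpha> / 4 * (N (w t \<omega> - u \<omega>))\<^sup>2)
      = (\<Sum>t=1..T. excess t \<omega> + \<alpha> / 4 * (distance t \<omega>)\<^sup>2)" for T
    unfolding sum_subtractf[symmetric] by (intro sum.cong) (simp_all add: excess_def distance_def)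
  then show ?thesis unfolding regret_bounded_def by (smt (verit))
qed

section \<open>The exponential supermartingale\<close>

definition "rate = \<alpha> / (8 * L\<^sup>2)"

lemma rate_pos: "0 < rate"
  using alpha_pos L_pos by (simp add: rate_def)

lemma distance_sq_le:
  assumes t: "t \<ge> 1" and \<omega>: "\<omega> \<in> space M"
  shows "\<alpha> / 2 * (distance t \<omega>)\<^sup>2 \<le> 2 * L * distance t \<omega>"
proof -
  have d: "0 \<le> distance t \<omega>" "distance t \<omega> \<le> diam_bound" using distance_bounds[OF t \<omega>] by auto
  then have "\<alpha> * distance t \<omega> \<le> 4 * L" using alpha_pos by (simp add: diam_bound_def field_simps)
  then have "\<alpha> / 2 * distance t \<omega> * distance t \<omega> \<le> 2 * L * distance t \<omega>"
    using d by (intro mult_right_mono) auto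
  then show ?thesis by (simp add: power2_eq_square)
qed

lemma rate_exponent_cancels:
  "rate * (\<alpha> / 4 * r\<^sup>2) + (rate * (- (\<alpha> / 2) * r\<^sup>2) + (rate * (2 * L * r))\<^sup>2 / 2) = 0"
proof -
  have "2 * rate * L\<^sup>2 = \<alpha> / 4" using L_pos by (simp add: rate_def field_simps)
  then show ?thesis by (simp add: power2_eq_square algebra_simps)
qed

text \<open>The conditional Hoeffding lemma with range \<open>[-2 L d, 2 L d]\<close> and conditional mean at most
  \<open>-\<alpha>/2 * d\<^sup>2\<close> (\<open>d = distance t\<close>); the choice of \<open>rate\<close> makes the resulting exponent vanish.\<close>
lemma weighted_exp_excess_le:
  assumes t: "t \<ge> 1" and W: "bounded_weight (F (t - 1)) W"
  shows "(\<integral>\<omega>. W \<omega> * exp (rate * (excess t \<omega> + \<alpha> / 4 * (distance t \<omega>)\<^sup>2)) \<partial>M) \<le> (\<integral>\<omega>. W \<omega> \<partial>M)"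
proof -
  define d where "d = distance t"
  have dF: "d \<in> borel_measurable (F (t - 1))" unfolding d_def by (rule measurable_distance[OF t])
  have d: "0 \<le> d \<omega>" "d \<omega> \<le> diam_bound" if "\<omega> \<in> space M" for \<omega>
    using distance_bounds[OF t that] by (auto simp: d_def)
  define W' where "W' \<omega> = W \<omega> * exp (rate * (\<alpha> / 4 * (d \<omega>)\<^sup>2))" for \<omega>
  have W': "bounded_weight (F (t - 1)) W'"
    unfolding W'_def
  proof (intro bounded_weight_mult W bounded_weightI[where B="exp (rate * (\<alpha> / 4 * diam_bound\<^sup>2))"])
    show "(\<lambda>\<omega>. exp (rate * (\<alpha> / 4 * (d \<omega>)\<^sup>2))) \<in> borel_measurable (F (t - 1))"
      using dF by measurable
    show "0 \<le> exp (rate * (\<alpha> / 4 * (d \<omega>)\<^sup>2)) \<and> exp (rate * (\<alpha> / 4 * (d \<omega>)\<^sup>2)) \<le> exp (rate * (\<alpha> / 4 * diam_bound\<^sup>2))"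
      if "\<omega> \<in> space (F (t - 1))" for \<omega>
      using d[of \<omega>] that space_F rate_pos alpha_pos by (auto intro!: mult_left_mono power_mono)
  qed
  have Hoeffding: "(\<integral>\<omega>. W' \<omega> * exp (rate * excess t \<omega>) \<partial>M)
      \<le> (\<integral>\<omega>. W' \<omega> * exp (rate * (- (\<alpha> / 2) * (d \<omega>)\<^sup>2) + (rate * (2 * L * d \<omega>))\<^sup>2 / 2) \<partial>M)"
  proof (rule weighted_Hoeffding[OF subalgebra_F _ _ _ _ _ _ _ W' less_imp_le[OF rate_pos]])
    show "excess t \<in> borel_measurable M" using measurable_from_F[OF measurable_excess[OF t]] .
    show "AE \<omega> in M. \<bar>excess t \<omega>\<bar> \<le> 2 * L * d \<omega>"
      using AE_space AE_Lipschitz_at[OF t] by eventually_elim (simp add: d_def excess_bound[OF t])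
    show "(\<lambda>\<omega>. 2 * L * d \<omega>) \<in> borel_measurable (F (t - 1))"
      "(\<lambda>\<omega>. - (\<alpha> / 2) * (d \<omega>)\<^sup>2) \<in> borel_measurable (F (t - 1))"
      using dF by measurable
    show "2 * L * d \<omega> \<le> 2 * L * diam_bound" if "\<omega> \<in> space M" for \<omega>
      using d[OF that] L_pos by simp
    show "\<bar>- (\<alpha> / 2) * (d \<omega>)\<^sup>2\<bar> \<le> 2 * L * d \<omega>" if "\<omega> \<in> space M" for \<omega>
      using distance_sq_le[OF t that] alpha_pos by (simp add: d_def)
    show "(\<integral>\<omega>. V \<omega> * excess t \<omega> \<partial>M) \<le> (\<integral>\<omega>. V \<omega> * (- (\<alpha> / 2) * (d \<omega>)\<^sup>2) \<partial>M)"
      if "bounded_weight (F (t - 1)) V" for V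
      using weighted_excess_le[OF t that] by (simp add: d_def)
  qed
  have "(\<integral>\<omega>. W \<omega> * exp (rate * (excess t \<omega> + \<alpha> / 4 * (distance t \<omega>)\<^sup>2)) \<partial>M)
      = (\<integral>\<omega>. W' \<omega> * exp (rate * excess t \<omega>) \<partial>M)"
    by (intro Bochner_Integration.integral_cong) (simp_all add: W'_def d_def exp_add[symmetric] distrib_left ac_simps)
  also note Hoeffding
  also have "(\<integral>\<omega>. W' \<omega> * exp (rate * (- (\<alpha> / 2) * (d \<omega>)\<^sup>2) + (rate * (2 * L * d \<omega>))\<^sup>2 / 2) \<partial>M)
      = (\<integral>\<omega>. W \<omega> \<partial>M)"
  proof (intro Bochner_Integration.integral_cong refl)
    fix \<omega>
    have "W' \<omega> * exp (rate * (- (\<alpha> / 2) * (d \<omega>)\<^sup>2) + (rate * (2 * L * d \<omega>))\<^sup>2 / 2)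
        = W \<omega> * exp (rate * (\<alpha> / 4 * (d \<omega>)\<^sup>2) + (rate * (- (\<alpha> / 2) * (d \<omega>)\<^sup>2) + (rate * (2 * L * d \<omega>))\<^sup>2 / 2))"
      unfolding W'_def exp_add by (simp add: mult.assoc)
    then show "W' \<omega> * exp (rate * (- (\<alpha> / 2) * (d \<omega>)\<^sup>2) + (rate * (2 * L * d \<omega>))\<^sup>2 / 2) = W \<omega>"
      by (simp only: rate_exponent_cancels) simp
  qed
  finally show ?thesis .
qed

definition "clip_bound = 2 * L * diam_bound + \<alpha> / 4 * diam_bound\<^sup>2"

text \<open>Clipping makes the increments bounded everywhere, not only almost surely; by
  \<open>excess_bound\<close> it changes nothing on the Lipschitz event.\<close>
definition "clipped_increment t \<omega> =
  max (- clip_bound) (min clip_bound (excess t \<omega> + \<alpha> / 4 * (distance t \<omega>)\<^sup>2))"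

definition "exp_process n \<omega> = exp (rate * (\<Sum>t\<in>{1..n}. clipped_increment t \<omega>))"

lemma clipped_increment_eq:
  assumes t: "t \<ge> 1" and \<omega>: "\<omega> \<in> space M" and Lip: "Lipschitz_at t \<omega>"
  shows "clipped_increment t \<omega> = excess t \<omega> + \<alpha> / 4 * (distance t \<omega>)\<^sup>2"
proof -
  have d: "0 \<le> distance t \<omega>" "distance t \<omega> \<le> diam_bound" using distance_bounds[OF t \<omega>] by auto
  have "\<bar>excess t \<omega>\<bar> \<le> 2 * L * diam_bound"
    using excess_bound[OF t \<omega> Lip] d L_pos by (smt (verit) mult_left_mono)
  moreover have "0 \<le> \<alpha> / 4 * (distance t \<omega>)\<^sup>2" "\<alpha> / 4 * (distance t \<omega>)\<^sup>2 \<le> \<alpha> / 4 * diam_bound\<^sup>2"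
    using d alpha_pos by (auto intro!: power_mono)
  ultimately show ?thesis unfolding clipped_increment_def clip_bound_def by auto
qed

lemma exp_process_bound: "exp_process n \<omega> \<le> exp (rate * (real n * clip_bound))"
proof -
  have "0 \<le> clip_bound"
    using L_pos alpha_pos diam_bound_nonneg by (simp add: clip_bound_def)
  then have "(\<Sum>t\<in>{1..n}. clipped_increment t \<omega>) \<le> (\<Sum>t\<in>{1..n}. clip_bound)"
    by (intro sum_mono) (simp add: clipped_increment_def)
  then show ?thesis unfolding exp_process_def using rate_pos by simp
qed

lemma exp_process_Suc: "exp_process (Suc n) \<omega> = exp_process n \<omega> * exp (rate * clipped_increment (Suc n) \<omega>)"
  by (simp add: exp_process_def distrib_left exp_add)

lemma measurable_exp_process: "exp_process n \<in> borel_measurable (F n)"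
proof -
  have "clipped_increment t \<in> borel_measurable (F n)" if "t \<in> {1..n}" for t
  proof -
    have t: "t \<ge> 1" "t \<le> n" using that by auto
    have [measurable]: "excess t \<in> borel_measurable (F n)"
      using measurable_F_mono[OF t(2) measurable_excess[OF t(1)]] .
    have [measurable]: "distance t \<in> borel_measurable (F n)"
      using measurable_F_mono[OF _ measurable_distance[OF t(1)], of n] t by simp
    show ?thesis unfolding clipped_increment_def by measurable
  qed
  then show ?thesis unfolding exp_process_def by measurable
qed

lemma exp_process_nonneg_supermartingale: "nonneg_supermartingale M F exp_process"
proof unfold_locales
  show "integrable M (exp_process n)" for n
  proof (rule integrable_const_bound[where B="exp (rate * (real n * clip_bound))"])
    show "AE \<omega> in M. norm (exp_process n \<omega>) \<le> exp (rate * (real n * clip_bound))"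
      using exp_process_bound by (simp add: exp_process_def)
  qed (rule measurable_from_F[OF measurable_exp_process])
  show "(\<integral>\<omega>. indicator A \<omega> * exp_process (Suc n) \<omega> \<partial>M) \<le> (\<integral>\<omega>. indicator A \<omega> * exp_process n \<omega> \<partial>M)"
    if A: "A \<in> sets (F n)" for n A
  proof -
    define W where "W \<omega> = indicator A \<omega> * exp_process n \<omega>" for \<omega>
    have W: "bounded_weight (F (Suc n - 1)) W"
    proof -
      have "bounded_weight (F n) (exp_process n)"
        using exp_process_bound
        by (intro bounded_weightI[OF measurable_exp_process]) (auto simp: exp_process_def)
      then show ?thesis unfolding W_def using bounded_weight_mult[OF bounded_weight_indicator[OF A]] by simp
    qed
    have AM: "A \<in> sets M" using A subalgebra_F by (auto simp: subalgebra_def)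
    have Lip: "AE \<omega> in M. Lipschitz_at (Suc n) \<omega>" by (rule AE_Lipschitz_at) simp
    have "(\<integral>\<omega>. indicator A \<omega> * exp_process (Suc n) \<omega> \<partial>M)
        = (\<integral>\<omega>. W \<omega> * exp (rate * (excess (Suc n) \<omega> + \<alpha> / 4 * (distance (Suc n) \<omega>)\<^sup>2)) \<partial>M)"
    proof (rule integral_cong_AE)
      show "(\<lambda>\<omega>. indicator A \<omega> * exp_process (Suc n) \<omega>) \<in> borel_measurable M"
        using AM measurable_from_F[OF measurable_exp_process] by measurable
      show "(\<lambda>\<omega>. W \<omega> * exp (rate * (excess (Suc n) \<omega> + \<alpha> / 4 * (distance (Suc n) \<omega>)\<^sup>2))) \<in> borel_measurable M"
        unfolding W_def using AM measurable_from_F[OF measurable_exp_process]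
          measurable_from_F[OF measurable_excess] measurable_from_F[OF measurable_distance]
        by measurable
      show "AE \<omega> in M. indicator A \<omega> * exp_process (Suc n) \<omega>
          = W \<omega> * exp (rate * (excess (Suc n) \<omega> + \<alpha> / 4 * (distance (Suc n) \<omega>)\<^sup>2))"
        using AE_space Lip
        by eventually_elim (simp add: W_def exp_process_Suc clipped_increment_eq)
    qed
    also have "\<dots> \<le> (\<integral>\<omega>. W \<omega> \<partial>M)"
      by (rule weighted_exp_excess_le[OF _ W]) simp
    finally show ?thesis by (simp add: W_def)
  qed
qed (use filtration measurable_exp_process in \<open>auto simp: exp_process_def\<close>)

theorem regret_bounded_with_high_probability:
  assumes \<delta>: "0 < \<delta>"
  shows "\<exists>A\<in>sets M. 1 - \<delta> \<le> measure M A \<and> (\<forall>\<omega>\<in>A. regret_bounded \<delta> \<omega>)"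
proof -
  interpret Z: nonneg_supermartingale M F exp_process
    by (rule exp_process_nonneg_supermartingale)
  define Bad where "Bad = {\<omega> \<in> space M. \<exists>n. 1 / \<delta> \<le> exp_process n \<omega>}"
  have Bad: "Bad \<in> sets M"
    using Z.exceedance_set_in_sets[OF sets.top, of UNIV] by (simp add: Bad_def)
  have "measure M Bad \<le> (\<integral>\<omega>. exp_process 0 \<omega> \<partial>M) / (1 / \<delta>)"
    unfolding Bad_def using \<delta> by (intro Z.maximal_inequality) simp
  then have large: "1 - \<delta> \<le> measure M (space M - Bad)"
    using \<delta> Bad by (simp add: exp_process_def prob_compl prob_space)
  have AE_Lip: "AE \<omega> in M. \<forall>t. 1 \<le> t \<longrightarrow> Lipschitz_at t \<omega>"
    unfolding AE_all_countable using AE_Lipschitz_at by auto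
  obtain A where A: "A \<in> sets M" "A \<subseteq> space M - Bad" "measure M A = measure M (space M - Bad)"
    and Lip: "\<And>\<omega>. \<omega> \<in> A \<Longrightarrow> \<forall>t. 1 \<le> t \<longrightarrow> Lipschitz_at t \<omega>"
    using AE_restrict_event[OF AE_Lip sets.Diff[OF sets.top Bad]] by metis
  have "regret_bounded \<delta> \<omega>" if \<omega>: "\<omega> \<in> A" for \<omega>
    unfolding regret_bounded_iff
  proof
    fix T
    have \<omega>M: "\<omega> \<in> space M" and "\<omega> \<notin> Bad" using A(2) \<omega> by auto
    then have "exp_process T \<omega> < 1 / \<delta>" by (auto simp: Bad_def not_le)
    then have "exp (rate * (\<Sum>t\<in>{1..T}. clipped_increment t \<omega>)) < exp (ln (1 / \<delta>))"
      using \<delta> by (simp add: exp_process_def)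
    then have "rate * (\<Sum>t\<in>{1..T}. clipped_increment t \<omega>) < ln (1 / \<delta>)"
      by (simp only: exp_less_cancel_iff)
    moreover have "(\<Sum>t\<in>{1..T}. clipped_increment t \<omega>) = (\<Sum>t=1..T. excess t \<omega> + \<alpha> / 4 * (distance t \<omega>)\<^sup>2)"
      using clipped_increment_eq[OF _ \<omega>M] Lip[OF \<omega>] by (intro sum.cong) auto
    ultimately have "(\<Sum>t=1..T. excess t \<omega> + \<alpha> / 4 * (distance t \<omega>)\<^sup>2) < ln (1 / \<delta>) / rate"
      using rate_pos by (simp add: field_simps)
    also have "ln (1 / \<delta>) / rate = 8 * L\<^sup>2 * ln (1 / \<delta>) / \<alpha>"
      using alpha_pos L_pos by (simp add: rate_def field_simps)
    finally show "(\<Sum>t=1..T. excess t \<omega> + \<alpha> / 4 * (distance t \<omega>)\<^sup>2) \<le> 8 * L\<^sup>2 * ln (1 / \<delta>) / \<alpha>"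
      by simp
  qed
  with A large show ?thesis by (intro bexI[of _ A]) auto
qed

end

theorem lemma5:
  fixes M :: "'a measure"
    and F :: "nat \<Rightarrow> 'a measure"
    and H :: "(real ^ 'd) set"
    and N :: "real ^ 'd \<Rightarrow> real"
    and f :: "nat \<Rightarrow> 'a \<Rightarrow> real ^ 'd \<Rightarrow> real"
    and grad :: "nat \<Rightarrow> 'a \<Rightarrow> real ^ 'd \<Rightarrow> real ^ 'd"
    and u :: "'a \<Rightarrow> real ^ 'd"
    and w :: "nat \<Rightarrow> 'a \<Rightarrow> real ^ 'd"
    and \<alpha> L \<delta> :: real
  assumes "prob_space M"
    and "is_filtration M F"
    and "convex H"
    and "is_norm N"
    and "\<alpha> > 0"
    \<comment> \<open>each f t is (pathwise) differentiable, with gradient grad t\<close>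
    and "\<And>t \<omega> x. t \<ge> 1 \<Longrightarrow> \<omega> \<in> space M \<Longrightarrow>
           (f t \<omega> has_derivative (\<lambda>h. grad t \<omega> x \<bullet> h)) (at x)"
    \<comment> \<open>(1) u, w t are random points of H, measurable w.r.t. F 0 and F (t-1)\<close>
    and "u \<in> borel_measurable (F 0)"
    and "\<And>\<omega>. \<omega> \<in> space M \<Longrightarrow> u \<omega> \<in> H"
    and "\<And>t. t \<ge> 1 \<Longrightarrow> w t \<in> borel_measurable (F (t - 1))"
    and "\<And>t \<omega>. t \<ge> 1 \<Longrightarrow> \<omega> \<in> space M \<Longrightarrow> w t \<omega> \<in> H"
    \<comment> \<open>(2) f t is F t-measurable and integrable, and (a version of) E[f t | F (t-1)]
        is alpha-strongly convex w.r.t. N almost surely\<close>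
    and "\<And>t x. t \<ge> 1 \<Longrightarrow> (\<lambda>\<omega>. f t \<omega> x) \<in> borel_measurable (F t)"
    and "\<And>t x. t \<ge> 1 \<Longrightarrow> x \<in> H \<Longrightarrow> integrable M (\<lambda>\<omega>. f t \<omega> x)"
    and "\<And>t. t \<ge> 1 \<Longrightarrow> \<exists>g :: 'a \<Rightarrow> real ^ 'd \<Rightarrow> real.
           (\<forall>x\<in>H. (\<lambda>\<omega>. g \<omega> x) \<in> borel_measurable (F (t - 1))
                 \<and> (AE \<omega> in M. g \<omega> x = real_cond_exp M (F (t - 1)) (\<lambda>\<omega>'. f t \<omega>' x) \<omega>))
           \<and> (AE \<omega> in M. strongly_convex_wrt H \<alpha> N (g \<omega>))"
    \<comment> \<open>(3) f t is almost surely L-Lipschitz w.r.t. N on H\<close>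
    and "\<And>t. t \<ge> 1 \<Longrightarrow> AE \<omega> in M. \<forall>x\<in>H. \<forall>y\<in>H. \<bar>f t \<omega> x - f t \<omega> y\<bar> \<le> L * N (x - y)"
    and "0 < \<delta>" and "\<delta> < 1"
  shows "\<exists>A\<in>sets M. measure M A \<ge> 1 - \<delta> \<and>
           (\<forall>\<omega>\<in>A. \<forall>T::nat.
              (\<Sum>t=1..T. f t \<omega> (w t \<omega>) - f t \<omega> (u \<omega>))
                \<le> (\<Sum>t=1..T. (w t \<omega> - u \<omega>) \<bullet> grad t \<omega> (w t \<omega>)
                               - \<alpha> / 4 * (N (w t \<omega> - u \<omega>))\<^sup>2)
                  + 8 * L\<^sup>2 * ln (1 / \<delta>) / \<alpha>)"
proof -
  interpret cond_strongly_convex_losses M F H N f grad u w \<alpha> L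
    by (intro cond_strongly_convex_losses.intro cond_strongly_convex_losses_axioms.intro) (fact assms)+
  have "\<exists>A\<in>sets M. 1 - \<delta> \<le> measure M A \<and> (\<forall>\<omega>\<in>A. regret_bounded \<delta> \<omega>)"
  proof (cases "L > 0")
    case True
    interpret cond_strongly_convex_losses_pos M F H N f grad u w \<alpha> L
      by unfold_locales (fact True)
    show ?thesis by (rule regret_bounded_with_high_probability[OF \<open>0 < \<delta>\<close>])
  next
    case False
    then show ?thesis
      using regret_bounded_if_L_nonpos \<open>0 < \<delta>\<close> \<open>\<delta> < 1\<close>
      by (intro bexI[of _ "space M"]) (auto simp: prob_space)
  qed
  then show ?thesis unfolding regret_bounded_def by simp
qed

end
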